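(* Let $\mathcal{X}=\{1,\ldots,n\}$, let $p=(p(1),\ldots,p(n))$ be a probability vector with $p(1)\geq p(2)\geq\cdots\geq p(n)>0$ (the prior of the secret $X$), and let $k$ be a positive integer with $k<n$. Define $$j^*:=\min\Big\{j:1\leq j\leq k,\ p(j)\leq \tfrac{\sum_{i=j}^{n}p(i)}{k-j+1}\Big\}$$ and the probability vector $\pi=(\pi_1,\ldots,\pi_k)$ by $\pi_l=p(l)$ for $l\leq j^*-1$ and $\pi_l=\frac{\sum_{i=j^*}^n p(i)}{k-j^*+1}$ for $j^*\leq l\leq k$. Then: (A) For every generalised entropy $(\eta,F)$, the maximum of the posterior entropy $H(X\mid Y)$ over all feasible channels (channels all of whose outputs have pre-image of size at most $k$) equals $H(\pi)=\eta(F(\pi))$. (B) Let $\mathcal{M}^*$ be the family of all subsets $M\subseteq\mathcal{X}$ with $|M|=k$ and $\{1,\ldots,j^*-1\}\subseteq M$. The linear system $$\sum_{M\in\mathcal{M}^*:\, i\in M} v_M = p(i)\quad (i=j^*,\ldots,n),\qquad v_M\geq 0\ \ (M\in\mathcal{M}^* )$$ has a solution, and for any such solution $v$, the channel with output set $\{y_M: M\in\mathcal{M}^*\}$ and transition probabilities $p(y_M\mid i)=v_M/p(i)$ for $i\in\{j^*,\ldots,n\}$ with $i\in M$; $p(y_M\mid i)=v_M(k-j^*+1)/\sum_{j=j^*}^n p(j)$ for $i\in\{1,\ldots,j^*-1\}$; and $p(y_M\mid i)=0$ otherwise, is a feasible channel which satisfies $H(X\mid Y)=H(\pi)$ simultaneously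 for every generalised entropy $(\eta,F)$.
   Context: Generalised entropy: a pair $(\eta,F)$ where $F$ is a bounded real-valued function defined on probability vectors of every finite length, which is symmetric (its value is unchanged by permuting the entries) and expansible (its value is unchanged by appending zero entries), and $\eta$ is a real function of a real variable, such that either (a) $\eta$ is increasing and $F$ is concave, or (b) $\eta$ is decreasing and $F$ is convex (concave means $\lambda F(p_1)+(1-\lambda)F(p_2)\leq F(\lambda p_1+(1-\lambda)p_2)$ for all $\lambda\in[0,1]$ and probability vectors $p_1,p_2$ of the same length; convex with the reverse inequality). For a random variable with distribution $q$, $H(q)=\eta(F(q))$. For jointly distributed discrete $X,Y$, $H(X\mid Y)=\eta\big(\sum_{y\in\mathcal{Y}^+}p(y)F(p_{X\mid y})\big)$, where $\mathcal{Y}^+=\{y:p(y)>0\}$ and $p_{X\mid y}=(p(x\mid y))_{x\in\mathcal{X}}$ is the posterior vector. Channel: a discrete output set $\mathcal{Y}$ together with conditional probabilities $p(y\mid x)\geq 0$, $\sum_{y\in\mathcal{Y}}p(y\mid x)=1$ for each $x\in\mathcal{X}$; with input $X\sim p$, the output $Y$ has $p(y)=\sum_x p(x)p(y\mid x)$ and $p(x\mid y)=p(x)p(y\mid x)/p(y)$ for $p(y)>0$. The pre-image of an output $y$ is $\mathrm{PreIm}(y)=\{x\in\mathcal{X}:p(y\mid x)>0\}$. A channel is feasible if $|\mathrm{PreIm}(y)|\leq k$ for every $y\in\mathcal{Y}$. *)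

theory Defs
  imports "HOL-Analysis.Analysis" "HOL-Library.Multiset"
begin

definition prob_vec :: "real list \<Rightarrow> bool" where
  "prob_vec q \<longleftrightarrow> (\<forall>x\<in>set q. 0 \<le> x) \<and> sum_list q = 1"

definition concave_F :: "(real list \<Rightarrow> real) \<Rightarrow> bool" where
  "concave_F F \<longleftrightarrow> (\<forall>q1 q2 (l::real). prob_vec q1 \<and> prob_vec q2 \<and> length q1 = length q2
     \<and> 0 \<le> l \<and> l \<le> 1 \<longrightarrow>
     l * F q1 + (1 - l) * F q2 \<le> F (map2 (\<lambda>a b. l * a + (1 - l) * b) q1 q2))"

definition convex_F :: "(real list \<Rightarrow> real) \<Rightarrow> bool" where
  "convex_F F \<longleftrightarrow> (\<forall>q1 q2 (l::real). prob_vec q1 \<and> prob_vec q2 \<and> length q1 = length q2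
     \<and> 0 \<le> l \<and> l \<le> 1 \<longrightarrow>
     F (map2 (\<lambda>a b. l * a + (1 - l) * b) q1 q2) \<le> l * F q1 + (1 - l) * F q2)"

definition gen_entropy :: "(real \<Rightarrow> real) \<Rightarrow> (real list \<Rightarrow> real) \<Rightarrow> bool" where
  "gen_entropy \<eta> F \<longleftrightarrow>
     (\<exists>B. \<forall>q. prob_vec q \<longrightarrow> \<bar>F q\<bar> \<le> B) \<and>
     (\<forall>q q'. prob_vec q \<and> mset q' = mset q \<longrightarrow> F q' = F q) \<and>
     (\<forall>q. prob_vec q \<longrightarrow> F (q @ [0]) = F q) \<and>
     ((mono \<eta> \<and> concave_F F) \<or> (antimono \<eta> \<and> convex_F F))"

text \<open>Channels from the input set {1..n}, with output type 'y; W x y = p(y|x).\<close>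
definition channel :: "nat \<Rightarrow> (nat \<Rightarrow> 'y \<Rightarrow> real) \<Rightarrow> bool" where
  "channel n W \<longleftrightarrow> (\<forall>x\<in>{1..n}. (\<forall>y. 0 \<le> W x y) \<and> (W x has_sum 1) UNIV)"

definition out_prob :: "(nat \<Rightarrow> real) \<Rightarrow> nat \<Rightarrow> (nat \<Rightarrow> 'y \<Rightarrow> real) \<Rightarrow> 'y \<Rightarrow> real" where
  "out_prob p n W y = (\<Sum>x=1..n. p x * W x y)"

definition posterior :: "(nat \<Rightarrow> real) \<Rightarrow> nat \<Rightarrow> (nat \<Rightarrow> 'y \<Rightarrow> real) \<Rightarrow> 'y \<Rightarrow> real list" where
  "posterior p n W y = map (\<lambda>x. p x * W x y / out_prob p n W y) [1..<n+1]"

definition cond_entropy :: "(real \<Rightarrow> real) \<Rightarrow> (real list \<Rightarrow> real) \<Rightarrow> (nat \<Rightarrow> real) \<Rightarrow> nat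
     \<Rightarrow> (nat \<Rightarrow> 'y \<Rightarrow> real) \<Rightarrow> real" where
  "cond_entropy \<eta> F p n W =
     \<eta> (infsum (\<lambda>y. out_prob p n W y * F (posterior p n W y)) {y. out_prob p n W y > 0})"

definition preim :: "nat \<Rightarrow> (nat \<Rightarrow> 'y \<Rightarrow> real) \<Rightarrow> 'y \<Rightarrow> nat set" where
  "preim n W y = {x\<in>{1..n}. W x y > 0}"

definition feasible :: "nat \<Rightarrow> nat \<Rightarrow> (nat \<Rightarrow> 'y \<Rightarrow> real) \<Rightarrow> bool" where
  "feasible n k W \<longleftrightarrow> channel n W \<and> (\<forall>y. card (preim n W y) \<le> k)"

definition tail_mass :: "(nat \<Rightarrow> real) \<Rightarrow> nat \<Rightarrow> nat \<Rightarrow> real" where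
  "tail_mass p n j = (\<Sum>i=j..n. p i)"

definition jstar :: "(nat \<Rightarrow> real) \<Rightarrow> nat \<Rightarrow> nat \<Rightarrow> nat" where
  "jstar p n k = (LEAST j. 1 \<le> j \<and> j \<le> k \<and>
       p j \<le> tail_mass p n j / (real k - real j + 1))"

definition pi_vec :: "(nat \<Rightarrow> real) \<Rightarrow> nat \<Rightarrow> nat \<Rightarrow> real list" where
  "pi_vec p n k = map (\<lambda>l. if l < jstar p n k then p l
        else tail_mass p n (jstar p n k) / (real k - real (jstar p n k) + 1)) [1..<k+1]"

definition Mstar :: "nat \<Rightarrow> nat \<Rightarrow> nat \<Rightarrow> nat set set" where
  "Mstar n k j = {M. M \<subseteq> {1..n} \<and> card M = k \<and> {1..<j} \<subseteq> M}"

definition lin_sol :: "(nat \<Rightarrow> real) \<Rightarrow> nat \<Rightarrow> nat \<Rightarrow> (nat set \<Rightarrow> real) \<Rightarrow> bool" where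
  "lin_sol p n k v \<longleftrightarrow>
     (\<forall>M\<in>Mstar n k (jstar p n k). 0 \<le> v M) \<and>
     (\<forall>i\<in>{jstar p n k..n}. (\<Sum>M\<in>{M\<in>Mstar n k (jstar p n k). i \<in> M}. v M) = p i)"

text \<open>The channel built from a solution v; output y_M is represented by M itself;
  outputs not in Mstar have probability zero from every input.\<close>
definition opt_channel :: "(nat \<Rightarrow> real) \<Rightarrow> nat \<Rightarrow> nat \<Rightarrow> (nat set \<Rightarrow> real) \<Rightarrow> nat \<Rightarrow> nat set \<Rightarrow> real" where
  "opt_channel p n k v i M =
     (let j = jstar p n k in
      if M \<in> Mstar n k j then
        (if j \<le> i \<and> i \<le> n \<and> i \<in> M then v M / p i
         else if 1 \<le> i \<and> i < j then v M * (real k - real j + 1) / tail_mass p n j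
         else 0)
      else 0)"

end

theory Submission
  imports Defs "HOL-Combinatorics.Transposition"
begin

(* Upper bound: every posterior of a feasible channel lives on at most k inputs.  Keeping its part
   below j* and spreading the rest evenly over the unused slots of {1..k} can only increase F
   (symmetry plus concavity).  Averaged over the outputs, these flattened posteriors form a
   probability vector whose prefix sums dominate those of pi, so Jensen's inequality for countable
   mixtures and the Schur-concavity of F (via Robin Hood transfers) bound the posterior entropy by
   F(pi).  Attainment: a vector with entries in [0, c] and total r c is a nonnegative combination
   of indicators of r-sets, which solves the linear system, and then every posterior of the
   resulting channel is pi padded with zeros, up to order.  The convex, decreasing case is the
   concave, increasing one for -F. *)

definition tabulate :: "nat \<Rightarrow> (nat \<Rightarrow> real) \<Rightarrow> real list" where
  "tabulate N f = map f [1..<N+1]"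

lemma length_tabulate [simp]: "length (tabulate N f) = N"
  by (simp add: tabulate_def)

lemma tabulate_Suc: "tabulate (Suc N) f = tabulate N f @ [f (Suc N)]"
  by (simp add: tabulate_def)

lemma tabulate_cong: "(\<And>i. i \<in> {1..N} \<Longrightarrow> f i = g i) \<Longrightarrow> tabulate N f = tabulate N g"
  unfolding tabulate_def by (intro map_cong) auto

lemma sum_list_tabulate: "sum_list (tabulate N f) = sum f {1..N}"
proof -
  have "set [1..<N+1] = {1..N}" by auto
  then show ?thesis unfolding tabulate_def by (metis sum_set_upt_conv_sum_list_nat)
qed

lemma prob_vec_tabulate_iff: "prob_vec (tabulate N f) \<longleftrightarrow> (\<forall>i\<in>{1..N}. 0 \<le> f i) \<and> sum f {1..N} = 1"
  unfolding prob_vec_def sum_list_tabulate by (auto simp: tabulate_def)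

lemma map2_tabulate:
  "map2 (\<lambda>a b. l * a + (1 - l) * b) (tabulate N f) (tabulate N g) = tabulate N (\<lambda>i. l * f i + (1 - l) * g i)"
  unfolding tabulate_def by (simp add: zip_map_map zip_same_conv_map comp_def)

lemma mset_tabulate: "mset (tabulate N f) = image_mset f (mset_set {1..N})"
  unfolding tabulate_def mset_map mset_upt by (simp add: atLeastLessThanSuc_atLeastAtMost)

lemma mset_tabulate_comp_bij:
  assumes "bij_betw \<sigma> {1..N} {1..N}"
  shows "mset (tabulate N (f \<circ> \<sigma>)) = mset (tabulate N f)"
  using assms by (simp add: mset_tabulate bij_betw_def image_mset_mset_set flip: multiset.map_comp)

lemma mset_tabulate_supported:
  assumes "S \<subseteq> {1..N}" and "\<And>i. i \<in> {1..N} - S \<Longrightarrow> f i = 0"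
  shows "mset (tabulate N f) = image_mset f (mset_set S) + replicate_mset (N - card S) 0"
proof -
  have fin: "finite S" using assms(1) finite_subset by blast
  have "{1..N} = S \<union> ({1..N} - S)" using assms(1) by auto
  then have "mset_set {1..N} = mset_set S + mset_set ({1..N} - S)"
    by (metis Diff_disjoint fin finite_Diff finite_atLeastAtMost mset_set_Union)
  moreover have "image_mset f (mset_set ({1..N} - S)) = replicate_mset (N - card S) 0"
  proof -
    have "image_mset f (mset_set ({1..N} - S)) = image_mset (\<lambda>_. 0) (mset_set ({1..N} - S))"
      using assms(2) by (intro image_mset_cong) auto
    then show ?thesis using assms(1) fin by (simp add: image_mset_const_eq card_Diff_subset)
  qed
  ultimately show ?thesis by (simp add: mset_tabulate)
qed

definition transfer :: "(nat \<Rightarrow> real) \<Rightarrow> nat \<Rightarrow> nat \<Rightarrow> real \<Rightarrow> nat \<Rightarrow> real" where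
  "transfer q j m \<delta> = q(j := q j - \<delta>, m := q m + \<delta>)"

lemma sum_transfer:
  assumes "finite S" "j \<noteq> m"
  shows "sum (transfer q j m \<delta>) S = sum q S + (if m \<in> S then \<delta> else 0) - (if j \<in> S then \<delta> else 0)"
proof -
  have "transfer q j m \<delta> = (\<lambda>i. q i + (if i = m then \<delta> else 0) - (if i = j then \<delta> else 0))"
    using assms(2) by (auto simp: transfer_def)
  then show ?thesis using assms(1) by (simp add: sum.distrib sum_subtractf)
qed

lemma prob_vec_mset_eq: "prob_vec q \<Longrightarrow> mset q' = mset q \<Longrightarrow> prob_vec q'"
  unfolding prob_vec_def by (metis mset_eq_setD sum_mset_sum_list)

lemma transfer_towards_target:
  fixes q t :: "nat \<Rightarrow> real"
  assumes q: "prob_vec (tabulate N q)" and t: "prob_vec (tabulate N t)"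
    and jm: "j \<in> {1..N}" "m \<in> {1..N}" "t j < q j" "q m < t m"
  defines "q' \<equiv> transfer q j m (min (q j - t j) (t m - q m))"
  shows "prob_vec (tabulate N q')"
    and "card {i\<in>{1..N}. q' i \<noteq> t i} < card {i\<in>{1..N}. q i \<noteq> t i}"
proof -
  define \<delta> where "\<delta> = min (q j - t j) (t m - q m)"
  have "j \<noteq> m" using jm by auto
  then have q'_j: "q' j = q j - \<delta>" and q'_m: "q' m = q m + \<delta>"
    and q'_other: "\<And>i. i \<noteq> j \<Longrightarrow> i \<noteq> m \<Longrightarrow> q' i = q i"
    by (simp_all add: q'_def \<delta>_def transfer_def)
  have \<delta>: "0 \<le> \<delta>" "\<delta> \<le> q j - t j" "q' j = t j \<or> q' m = t m"
    using jm by (auto simp: \<delta>_def q'_j q'_m min_def)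
  have "0 \<le> t j" "\<forall>i\<in>{1..N}. 0 \<le> q i" using q t jm by (auto simp: prob_vec_tabulate_iff)
  have "0 \<le> q' i" if "i \<in> {1..N}" for i
  proof (cases "i = j")
    case True
    then show ?thesis using q'_j \<delta>(2) \<open>0 \<le> t j\<close> by simp
  next
    case False
    then show ?thesis
      using q'_m q'_other[of i] \<open>\<forall>i\<in>{1..N}. 0 \<le> q i\<close> that jm(2) \<delta>(1) by (cases "i = m") auto
  qed
  moreover have "sum q' {1..N} = 1"
    using q jm \<open>j \<noteq> m\<close> by (simp add: q'_def sum_transfer prob_vec_tabulate_iff)
  ultimately show "prob_vec (tabulate N q')" by (simp add: prob_vec_tabulate_iff)
  show "card {i\<in>{1..N}. q' i \<noteq> t i} < card {i\<in>{1..N}. q i \<noteq> t i}"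
  proof (rule psubset_card_mono)
    have "{i\<in>{1..N}. q' i \<noteq> t i} \<subseteq> {i\<in>{1..N}. q i \<noteq> t i} - ({j, m} \<inter> {i. q' i = t i})"
    proof
      fix i assume "i \<in> {i\<in>{1..N}. q' i \<noteq> t i}"
      then show "i \<in> {i\<in>{1..N}. q i \<noteq> t i} - ({j, m} \<inter> {i. q' i = t i})"
        using jm q'_other[of i] by (cases "i = j"; cases "i = m") auto
    qed
    moreover have "{j, m} \<inter> {i. q' i = t i} \<noteq> {}" using \<delta>(3) by auto
    moreover have "{j, m} \<subseteq> {i\<in>{1..N}. q i \<noteq> t i}" using jm by auto
    ultimately show "{i\<in>{1..N}. q' i \<noteq> t i} \<subset> {i\<in>{1..N}. q i \<noteq> t i}"
      by blast
  qed simp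
qed

lemma exists_above_below_mean:
  fixes q :: "'a \<Rightarrow> real"
  assumes "finite R" "sum q R = sum (\<lambda>_. a) R" "i0 \<in> R" "q i0 \<noteq> a"
  shows "(\<exists>j\<in>R. a < q j) \<and> (\<exists>m\<in>R. q m < a)"
proof (intro conjI; rule ccontr)
  assume "\<not> (\<exists>j\<in>R. a < q j)"
  then have "q i0 < a" "\<forall>i\<in>R. q i \<le> a" using assms(3,4) by (auto simp: not_less)
  then have "sum q R < sum (\<lambda>_. a) R" using assms(1,3) by (intro sum_strict_mono_ex1) auto
  then show False using assms(2) by simp
next
  assume "\<not> (\<exists>m\<in>R. q m < a)"
  then have "a < q i0" "\<forall>i\<in>R. a \<le> q i" using assms(3,4) by (auto simp: not_less)
  then have "sum (\<lambda>_. a) R < sum q R" using assms(1,3) by (intro sum_strict_mono_ex1) auto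
  then show False using assms(2) by simp
qed

lemma prefix_sums_transfer_ge:
  fixes q t :: "nat \<Rightarrow> real"
  assumes "1 \<le> j" "j < m" "m \<le> N"
    and prefix: "\<And>l. l \<le> N \<Longrightarrow> sum t {1..l} \<le> sum q {1..l}"
    and between: "\<And>i. j < i \<Longrightarrow> i < m \<Longrightarrow> q i = t i"
    and "0 \<le> \<delta>" "\<delta> \<le> q j - t j" "l \<le> N"
  shows "sum t {1..l} \<le> sum (transfer q j m \<delta>) {1..l}"
proof -
  have excess: "q j - t j \<le> sum q {1..l} - sum t {1..l}" if "j \<le> l" "l < m" for l
    using that
  proof (induction l rule: dec_induct)
    case base
    have "sum t {1..j - 1} \<le> sum q {1..j - 1}" using prefix assms(2,3) by simp
    moreover have "{1..j} = insert j {1..j - 1}" "j \<notin> {1..j - 1}" using assms(1) by auto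
    ultimately show ?case by simp
  next
    case (step l)
    then show ?case using between[of "Suc l"] by simp
  qed
  show ?thesis
  proof (cases "j \<le> l \<and> l < m")
    case True
    then show ?thesis using excess[of l] assms(1,7) by (simp add: sum_transfer)
  next
    case False
    then show ?thesis using prefix[OF \<open>l \<le> N\<close>] assms(1,2) by (auto simp: sum_transfer)
  qed
qed

lemma majorization_transfer_exists:
  fixes q t :: "nat \<Rightarrow> real"
  assumes sums: "sum q {1..N} = sum t {1..N}"
    and t_dec: "\<And>i l. 1 \<le> i \<Longrightarrow> i \<le> l \<Longrightarrow> l \<le> N \<Longrightarrow> t l \<le> t i"
    and prefix: "\<And>l. l \<le> N \<Longrightarrow> sum t {1..l} \<le> sum q {1..l}"
    and differ: "\<exists>i\<in>{1..N}. q i \<noteq> t i"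
  shows "\<exists>j\<in>{1..N}. \<exists>m\<in>{1..N}. t j < q j \<and> q m < t m \<and> t m \<le> t j \<and>
    (\<forall>l\<le>N. sum t {1..l} \<le> sum (transfer q j m (min (q j - t j) (t m - q m))) {1..l})"
proof -
  have ex_m: "\<exists>m. m \<in> {1..N} \<and> q m < t m"
  proof (rule ccontr)
    assume "\<not> ?thesis"
    then have "sum t {1..N} < sum q {1..N}"
      using differ by (intro sum_strict_mono_ex1) force+
    then show False using sums by simp
  qed
  define m where "m = (LEAST m. m \<in> {1..N} \<and> q m < t m)"
  have m: "m \<in> {1..N}" "q m < t m"
    using LeastI_ex[OF ex_m] by (auto simp: m_def)
  have below_m: "t i \<le> q i" if "1 \<le> i" "i < m" for i
    using not_less_Least[of i] that m(1) by (force simp: m_def)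
  have "m \<noteq> 1" using prefix[of 1] m by auto
  then have "sum t {1..m} = sum t {1..m - 1} + t m" "sum q {1..m} = sum q {1..m - 1} + q m"
    using m(1) sum.cl_ivl_Suc[of _ 1 "m - 1"] by (auto simp del: sum.cl_ivl_Suc)
  then have "sum t {1..m - 1} < sum q {1..m - 1}"
    using prefix[of m] m by simp
  have ex_j: "\<exists>j. j \<in> {1..<m} \<and> t j < q j"
  proof (rule ccontr)
    assume "\<not> ?thesis"
    then have "sum q {1..m - 1} \<le> sum t {1..m - 1}" by (intro sum_mono) (auto simp: not_less)
    then show False using \<open>sum t {1..m - 1} < sum q {1..m - 1}\<close> by simp
  qed
  define j where "j = (GREATEST j. j \<in> {1..<m} \<and> t j < q j)"
  have j: "j \<in> {1..<m}" "t j < q j"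
    using GreatestI_ex_nat[OF ex_j, of m] by (auto simp: j_def)
  have between: "q i = t i" if "j < i" "i < m" for i
  proof -
    have "\<not> (i \<in> {1..<m} \<and> t i < q i)"
      using Greatest_le_nat[of "\<lambda>j. j \<in> {1..<m} \<and> t j < q j" i m] that by (force simp: j_def)
    then show ?thesis using below_m[of i] that j by auto
  qed
  have "t m \<le> t j" using t_dec[of j m] j m by auto
  moreover have "\<forall>l\<le>N. sum t {1..l} \<le> sum (transfer q j m (min (q j - t j) (t m - q m))) {1..l}"
    using prefix between j m by (intro allI impI prefix_sums_transfer_ge) auto
  moreover have "j \<in> {1..N}" using j m by auto
  ultimately show ?thesis using j m by blast
qed

lemma has_sum_sum:
  fixes f :: "'i \<Rightarrow> 'a \<Rightarrow> real"
  assumes "finite I" "\<And>i. i \<in> I \<Longrightarrow> (f i has_sum s i) A"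
  shows "((\<lambda>y. \<Sum>i\<in>I. f i y) has_sum (\<Sum>i\<in>I. s i)) A"
  using assms by (induction I rule: finite_induct) (auto intro: has_sum_add)

lemma mixture_summable:
  assumes "w summable_on Y" "\<And>y. y \<in> Y \<Longrightarrow> 0 \<le> w y"
    and "\<And>y. y \<in> Y \<Longrightarrow> prob_vec (tabulate N (f y))" and "l \<in> {1..N}"
  shows "(\<lambda>y. w y * f y l) summable_on Y"
proof (rule summable_on_comparison_test[OF assms(1)])
  fix y assume y: "y \<in> Y"
  have "f y l \<le> sum (f y) {1..N}"
    using assms(3)[OF y] assms(4) by (intro member_le_sum) (auto simp: prob_vec_tabulate_iff)
  moreover have "0 \<le> f y l" using assms(3)[OF y] assms(4) by (auto simp: prob_vec_tabulate_iff)
  ultimately show "w y * f y l \<le> w y" "0 \<le> w y * f y l"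
    using assms(2)[OF y] assms(3)[OF y] by (simp_all add: prob_vec_tabulate_iff mult_left_le)
qed

lemma prob_vec_mixture:
  assumes "(w has_sum 1) Y"
    and "\<And>y. y \<in> Y \<Longrightarrow> 0 \<le> w y" "\<And>y. y \<in> Y \<Longrightarrow> prob_vec (tabulate N (f y))"
    and q: "\<And>l. l \<in> {1..N} \<Longrightarrow> ((\<lambda>y. w y * f y l) has_sum q l) Y"
  shows "prob_vec (tabulate N q)"
  unfolding prob_vec_tabulate_iff
proof
  show "\<forall>l\<in>{1..N}. 0 \<le> q l"
    using assms(2,3) by (auto intro!: has_sum_nonneg[OF q] simp: prob_vec_tabulate_iff)
  have "((\<lambda>y. \<Sum>l\<in>{1..N}. w y * f y l) has_sum sum q {1..N}) Y"
    using q by (intro has_sum_sum) auto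
  moreover have "((\<lambda>y. \<Sum>l\<in>{1..N}. w y * f y l) has_sum 1) Y"
    using assms(1,3) has_sum_cong[of Y "\<lambda>y. \<Sum>l\<in>{1..N}. w y * f y l" w]
    by (simp add: prob_vec_tabulate_iff flip: sum_distrib_left)
  ultimately show "sum q {1..N} = 1" using has_sum_unique by blast
qed

text \<open>The residual of a finite part of a countable mixture is what lets Jensen's inequality pass
  from finite to countable mixtures.\<close>

lemma mixture_residual:
  assumes w: "(w has_sum 1) Y" "\<And>y. y \<in> Y \<Longrightarrow> 0 \<le> w y"
    and f: "\<And>y. y \<in> Y \<Longrightarrow> prob_vec (tabulate N (f y))"
    and q: "\<And>l. l \<in> {1..N} \<Longrightarrow> ((\<lambda>y. w y * f y l) has_sum q l) Y"
    and S: "finite S" "S \<subseteq> Y"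
  shows "\<exists>g. prob_vec (tabulate N g) \<and> sum w S \<le> 1 \<and>
    (\<forall>l\<in>{1..N}. q l = (1 - sum w S) * g l + (\<Sum>y\<in>S. w y * f y l))"
proof -
  define m where "m = sum w S"
  have "(w has_sum (1 - m)) (Y - S)"
    unfolding m_def by (rule has_sum_Diff[OF w(1) has_sum_finite[OF S(1)] S(2)])
  then have "0 \<le> 1 - m" by (rule has_sum_nonneg) (use w(2) in auto)
  then have "m \<le> 1" by simp
  define r where "r l = q l - (\<Sum>y\<in>S. w y * f y l)" for l
  have r: "((\<lambda>y. w y * f y l) has_sum r l) (Y - S)" if "l \<in> {1..N}" for l
    unfolding r_def by (rule has_sum_Diff[OF q[OF that] has_sum_finite[OF S(1)] S(2)])
  have r_nonneg: "0 \<le> r l" if "l \<in> {1..N}" for l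
    using that w(2) f by (intro has_sum_nonneg[OF r[OF that]]) (auto simp: prob_vec_tabulate_iff)
  have "sum r {1..N} = sum q {1..N} - (\<Sum>y\<in>S. w y * sum (f y) {1..N})"
    by (simp add: r_def sum_subtractf sum_distrib_left sum.swap[of _ S])
  also have "(\<Sum>y\<in>S. w y * sum (f y) {1..N}) = m"
    unfolding m_def using f S(2) by (intro sum.cong) (auto simp: prob_vec_tabulate_iff)
  also have "sum q {1..N} = 1"
    using prob_vec_mixture[OF w f q] by (simp add: prob_vec_tabulate_iff)
  finally have r_sum: "sum r {1..N} = 1 - m" .
  define g where "g = (if m < 1 then (\<lambda>l. r l / (1 - m)) else q)"
  have "prob_vec (tabulate N g)"
    using r_nonneg r_sum prob_vec_mixture[OF w f q]
    by (auto simp: g_def prob_vec_tabulate_iff simp flip: sum_divide_distrib)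
  moreover have "q l = (1 - m) * g l + (\<Sum>y\<in>S. w y * f y l)" if "l \<in> {1..N}" for l
  proof (cases "m < 1")
    case False
    then have "sum r {1..N} = 0" using \<open>m \<le> 1\<close> r_sum by simp
    then have "r l = 0" using sum_nonneg_eq_0_iff[of "{1..N}" r] r_nonneg that by auto
    then show ?thesis using False \<open>m \<le> 1\<close> by (simp add: r_def)
  qed (simp add: g_def r_def)
  ultimately show ?thesis using \<open>m \<le> 1\<close> unfolding m_def by blast
qed

lemma summable_on_weighted_bounded:
  fixes w g :: "'y \<Rightarrow> real"
  assumes "w summable_on Y" "\<And>y. y \<in> Y \<Longrightarrow> 0 \<le> w y" "\<And>y. y \<in> Y \<Longrightarrow> \<bar>g y\<bar> \<le> B"
  shows "(\<lambda>y. w y * g y) summable_on Y"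
proof -
  have "Infinite_Sum.abs_summable_on (\<lambda>y. w y * g y) Y"
  proof (rule Infinite_Sum.abs_summable_on_comparison_test)
    show "Infinite_Sum.abs_summable_on (\<lambda>y. B * w y) Y"
      using assms(1) by (intro summable_on_iff_abs_summable_on_real[THEN iffD1] summable_on_cmult_right)
    fix y assume y: "y \<in> Y"
    have "\<bar>w y * g y\<bar> \<le> w y * B"
      using assms(2)[OF y] assms(3)[OF y] by (simp add: abs_mult mult_left_mono)
    also have "\<dots> \<le> \<bar>B * w y\<bar>" by (simp add: mult.commute)
    finally show "norm (w y * g y) \<le> norm (B * w y)" by simp
  qed
  then show ?thesis using summable_on_iff_abs_summable_on_real by blast
qed

locale symmetric_concave =
  fixes F :: "real list \<Rightarrow> real"
  assumes F_mset_eq: "\<And>q q'. prob_vec q \<Longrightarrow> mset q' = mset q \<Longrightarrow> F q' = F q"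
    and F_append_zero: "\<And>q. prob_vec q \<Longrightarrow> F (q @ [0]) = F q"
    and concave: "concave_F F"
begin

lemma F_tabulate_concave:
  assumes "prob_vec (tabulate N f)" "prob_vec (tabulate N g)" "0 \<le> l" "l \<le> 1"
  shows "l * F (tabulate N f) + (1 - l) * F (tabulate N g) \<le> F (tabulate N (\<lambda>i. l * f i + (1 - l) * g i))"
  using concave assms unfolding concave_F_def map2_tabulate[symmetric] by auto

lemma F_tabulate_pad_zeros:
  assumes "prob_vec (tabulate N f)" "N \<le> N'" "\<And>i. N < i \<Longrightarrow> i \<le> N' \<Longrightarrow> f i = 0"
  shows "F (tabulate N' f) = F (tabulate N f)"
  using assms(2,3)
proof (induction N' rule: dec_induct)
  case (step N')
  have "prob_vec (tabulate N' f)"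
    unfolding prob_vec_tabulate_iff
  proof
    have "sum f {1..N'} = sum f {1..N} + sum f {N+1..N'}"
      using step.hyps sum.ub_add_nat[of 1 N f "N' - N"] by simp
    also have "sum f {N+1..N'} = 0" using step.prems by (intro sum.neutral) auto
    finally show "sum f {1..N'} = 1" using assms(1) by (simp add: prob_vec_tabulate_iff)
    show "\<forall>i\<in>{1..N'}. 0 \<le> f i"
      using assms(1) step.prems by (auto simp: prob_vec_tabulate_iff not_le)
  qed
  then show ?case using step F_append_zero by (simp add: tabulate_Suc)
qed simp

lemma F_transfer_le:
  assumes q: "prob_vec (tabulate N q)" and jm: "j \<in> {1..N}" "m \<in> {1..N}"
    and \<delta>: "0 \<le> \<delta>" "\<delta> \<le> q j - q m"
  shows "F (tabulate N q) \<le> F (tabulate N (transfer q j m \<delta>))"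
proof (cases "\<delta> = 0")
  case True
  then show ?thesis by (simp add: transfer_def)
next
  case False
  define l where "l = \<delta> / (q j - q m)"
  have gap: "q j - q m > 0" using \<delta> False by linarith
  then have l: "0 \<le> l" "l \<le> 1" "\<delta> = l * (q j - q m)"
    using \<delta> by (auto simp: l_def field_simps)
  define g where "g = q \<circ> Transposition.transpose j m"
  have ms: "mset (tabulate N g) = mset (tabulate N q)"
    unfolding g_def using jm by (intro mset_tabulate_comp_bij) simp
  have "(1 - l) * F (tabulate N q) + (1 - (1 - l)) * F (tabulate N g)
      \<le> F (tabulate N (\<lambda>i. (1 - l) * q i + (1 - (1 - l)) * g i))"
    using l by (intro F_tabulate_concave q prob_vec_mset_eq[OF q ms]) auto
  moreover have "(\<lambda>i. (1 - l) * q i + (1 - (1 - l)) * g i) = transfer q j m \<delta>"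
    using l(3) by (auto simp: g_def transfer_def transpose_def algebra_simps)
  ultimately show ?thesis using F_mset_eq[OF q ms] by (simp add: algebra_simps)
qed

lemma F_le_by_transfers:
  assumes t: "prob_vec (tabulate N t)"
    and step: "\<And>q. P q \<Longrightarrow> prob_vec (tabulate N q) \<Longrightarrow> (\<exists>i\<in>{1..N}. q i \<noteq> t i) \<Longrightarrow>
      \<exists>j\<in>{1..N}. \<exists>m\<in>{1..N}. t j < q j \<and> q m < t m \<and> t m \<le> t j \<and>
        P (transfer q j m (min (q j - t j) (t m - q m)))"
    and "P q" "prob_vec (tabulate N q)"
  shows "F (tabulate N q) \<le> F (tabulate N t)"
  using assms(3,4)
proof (induction "card {i\<in>{1..N}. q i \<noteq> t i}" arbitrary: q rule: less_induct)
  case less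
  show ?case
  proof (cases "\<exists>i\<in>{1..N}. q i \<noteq> t i")
    case False
    then have "tabulate N q = tabulate N t" by (intro tabulate_cong) auto
    then show ?thesis by simp
  next
    case True
    then obtain j m where jm: "j \<in> {1..N}" "m \<in> {1..N}" "t j < q j" "q m < t m" "t m \<le> t j"
      and P': "P (transfer q j m (min (q j - t j) (t m - q m)))"
      using step less.prems by blast
    define \<delta> where "\<delta> = min (q j - t j) (t m - q m)"
    define q' where "q' = transfer q j m \<delta>"
    have "0 \<le> \<delta>" "\<delta> \<le> q j - q m"
      using jm by (simp_all add: \<delta>_def min_le_iff_disj)
    then have "F (tabulate N q) \<le> F (tabulate N q')"
      unfolding q'_def by (rule F_transfer_le[OF less.prems(2) jm(1,2)])
    also have "\<dots> \<le> F (tabulate N t)"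
    proof (rule less.hyps)
      show "card {i\<in>{1..N}. q' i \<noteq> t i} < card {i\<in>{1..N}. q i \<noteq> t i}"
        "prob_vec (tabulate N q')"
        unfolding q'_def \<delta>_def by (rule transfer_towards_target[OF less.prems(2) t jm(1-4)])+
      show "P q'" using P' by (simp add: q'_def \<delta>_def)
    qed
    finally show ?thesis .
  qed
qed

lemma F_le_if_majorizes:
  assumes q: "prob_vec (tabulate N q)" and t: "prob_vec (tabulate N t)"
    and t_dec: "\<And>i l. 1 \<le> i \<Longrightarrow> i \<le> l \<Longrightarrow> l \<le> N \<Longrightarrow> t l \<le> t i"
    and prefix: "\<And>l. l \<le> N \<Longrightarrow> sum t {1..l} \<le> sum q {1..l}"
  shows "F (tabulate N q) \<le> F (tabulate N t)"
proof -
  have step: "\<exists>j\<in>{1..N}. \<exists>m\<in>{1..N}. t j < q' j \<and> q' m < t m \<and> t m \<le> t j \<and>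
      (\<forall>l\<le>N. sum t {1..l} \<le> sum (transfer q' j m (min (q' j - t j) (t m - q' m))) {1..l})"
    if "\<forall>l\<le>N. sum t {1..l} \<le> sum q' {1..l}" "prob_vec (tabulate N q')"
      "\<exists>i\<in>{1..N}. q' i \<noteq> t i" for q'
    using that t t_dec by (intro majorization_transfer_exists) (auto simp: prob_vec_tabulate_iff)
  show ?thesis
    by (rule F_le_by_transfers[OF t step _ q]) (use prefix in auto)
qed

lemma F_le_average:
  assumes q: "prob_vec (tabulate N q)" and R: "R \<subseteq> {1..N}"
  shows "F (tabulate N q) \<le> F (tabulate N (\<lambda>i. if i \<in> R then sum q R / card R else q i))"
proof -
  define a where "a = sum q R / card R"
  define t where "t i = (if i \<in> R then a else q i)" for i
  have finR: "finite R" using R finite_subset by blast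
  have "real (card R) * a = sum q R"
    using finR by (cases "R = {}") (auto simp: a_def)
  then have sum_t_R: "sum t R = sum q R" by (simp add: t_def)
  have split: "sum g {1..N} = sum g R + sum g ({1..N} - R)" for g :: "nat \<Rightarrow> real"
    using sum.subset_diff[OF R, of g] by simp
  have "0 \<le> a"
    using q R unfolding a_def prob_vec_tabulate_iff by (auto intro!: divide_nonneg_nonneg sum_nonneg)
  then have t: "prob_vec (tabulate N t)"
    using q sum_t_R split[of t] split[of q] by (auto simp: prob_vec_tabulate_iff t_def)
  have step: "\<exists>j\<in>{1..N}. \<exists>m\<in>{1..N}. t j < q' j \<and> q' m < t m \<and> t m \<le> t j \<and>
      (\<forall>i\<in>{1..N} - R. transfer q' j m (min (q' j - t j) (t m - q' m)) i = t i)"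
    if P: "\<forall>i\<in>{1..N} - R. q' i = t i" and q': "prob_vec (tabulate N q')"
      and differ: "\<exists>i\<in>{1..N}. q' i \<noteq> t i" for q'
  proof -
    obtain i0 where "i0 \<in> {1..N}" "q' i0 \<noteq> t i0" using differ by blast
    then have i0: "i0 \<in> R" "q' i0 \<noteq> a" using P by (cases "i0 \<in> R"; auto simp: t_def)+
    have "sum q' ({1..N} - R) = sum t ({1..N} - R)" using P by simp
    then have sum_R: "sum q' R = sum (\<lambda>_. a) R"
      using q' t split[of q'] split[of t] sum_t_R \<open>real (card R) * a = sum q R\<close>
      by (simp add: prob_vec_tabulate_iff)
    obtain j m where j: "j \<in> R" "a < q' j" and m: "m \<in> R" "q' m < a"
      using exists_above_below_mean[OF finR sum_R i0] by blast
    have "t j < q' j" "q' m < t m" "t m \<le> t j" "j \<in> {1..N}" "m \<in> {1..N}"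
      using j m R by (auto simp: t_def)
    moreover have "\<forall>i\<in>{1..N} - R. transfer q' j m (min (q' j - t j) (t m - q' m)) i = t i"
      using j m P by (auto simp: transfer_def)
    ultimately show ?thesis by blast
  qed
  have "F (tabulate N q) \<le> F (tabulate N t)"
    by (rule F_le_by_transfers[OF t step _ q]) (auto simp: t_def)
  moreover have "t = (\<lambda>i. if i \<in> R then sum q R / card R else q i)"
    by (simp add: fun_eq_iff t_def a_def)
  ultimately show ?thesis by simp
qed

lemma F_le_spread:
  assumes x: "prob_vec (tabulate N x)"
    and AB: "A \<subseteq> {1..N}" "B \<subseteq> {1..N}" "A \<inter> B = {}"
    and supp: "\<And>i. i \<in> {1..N} - (A \<union> B) \<Longrightarrow> x i = 0"
    and D: "D \<subseteq> {1..N}" "A \<inter> D = {}" "card B \<le> card D"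
  shows "F (tabulate N x)
    \<le> F (tabulate N (\<lambda>i. if i \<in> A then x i else if i \<in> D then sum x B / card D else 0))"
proof -
  have fin: "finite A" "finite B" "finite D"
    using AB D by (meson finite_atLeastAtMost finite_subset)+
  obtain D' where D': "D' \<subseteq> D" "card D' = card B"
    using D(3) by (meson obtain_subset_with_card_n)
  then have "finite D'" using fin finite_subset by blast
  then obtain h where h: "bij_betw h D' B"
    using finite_same_card_bij[OF _ fin(2)] D' by blast
  define s where "s i = (if i \<in> A then x i else if i \<in> D' then x (h i) else 0)" for i
  have AD': "A \<inter> D' = {}" using D' D by auto
  have sA: "image_mset s (mset_set A) = image_mset x (mset_set A)"
    using fin by (intro image_mset_cong) (auto simp: s_def)
  have "image_mset s (mset_set D') = image_mset (x \<circ> h) (mset_set D')"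
    using AD' \<open>finite D'\<close> by (intro image_mset_cong) (auto simp: s_def)
  also have "\<dots> = image_mset x (mset_set B)"
    using h by (simp add: bij_betw_def image_mset_mset_set flip: multiset.map_comp)
  finally have sD': "image_mset s (mset_set D') = image_mset x (mset_set B)" .
  have "mset (tabulate N s) = image_mset s (mset_set (A \<union> D')) + replicate_mset (N - card (A \<union> D')) 0"
    using AB D D' by (intro mset_tabulate_supported) (auto simp: s_def)
  also have "\<dots> = image_mset x (mset_set (A \<union> B)) + replicate_mset (N - card (A \<union> B)) 0"
    using sA sD' AD' AB fin \<open>finite D'\<close> D' by (simp add: mset_set_Union card_Un_disjoint)
  also have "\<dots> = mset (tabulate N x)"
    using AB supp by (intro mset_tabulate_supported[symmetric]) auto
  finally have ms: "mset (tabulate N s) = mset (tabulate N x)" .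
  have s: "prob_vec (tabulate N s)" using prob_vec_mset_eq[OF x ms] .
  have "F (tabulate N x) = F (tabulate N s)" using F_mset_eq[OF x ms] by simp
  also have "F (tabulate N s) \<le> F (tabulate N (\<lambda>i. if i \<in> D then sum s D / card D else s i))"
    by (rule F_le_average[OF s D(1)])
  also have "sum s D = sum x B"
  proof -
    have "sum s D = sum s D'"
      using D' D(2) fin by (intro sum.mono_neutral_right) (auto simp: s_def disjoint_iff)
    also have "\<dots> = sum (x \<circ> h) D'"
      using AD' by (intro sum.cong) (auto simp: s_def)
    finally show ?thesis using sum.reindex_bij_betw[OF h] by (simp add: comp_def)
  qed
  also have "(\<lambda>i. if i \<in> D then sum x B / card D else s i)
      = (\<lambda>i. if i \<in> A then x i else if i \<in> D then sum x B / card D else 0)"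
    using D' D(2) by (auto simp: s_def fun_eq_iff disjoint_iff)
  finally show ?thesis .
qed

lemma sum_F_le_F_mixture:
  assumes "finite I" "\<And>i. i \<in> I \<Longrightarrow> 0 \<le> w i" "sum w I = 1"
    and "\<And>i. i \<in> I \<Longrightarrow> prob_vec (tabulate N (f i))"
  shows "(\<Sum>i\<in>I. w i * F (tabulate N (f i))) \<le> F (tabulate N (\<lambda>l. \<Sum>i\<in>I. w i * f i l))"
  using assms
proof (induction I arbitrary: w rule: finite_induct)
  case empty
  then show ?case by simp
next
  case (insert a I)
  have wI: "sum w I = 1 - w a" using insert by simp
  show ?case
  proof (cases "w a = 1")
    case True
    then have "\<forall>i\<in>I. w i = 0"
      using insert wI sum_nonneg_eq_0_iff[of I w] by auto
    then show ?thesis using insert True by simp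
  next
    case False
    define W where "W = 1 - w a"
    have W: "W > 0" using False insert wI sum_nonneg[of I w] by (simp add: W_def)
    define w' where "w' i = w i / W" for i
    define g where "g l = (\<Sum>i\<in>I. w' i * f i l)" for l
    have w': "\<And>i. i \<in> I \<Longrightarrow> 0 \<le> w' i" "sum w' I = 1"
      using insert W wI by (auto simp: w'_def W_def simp flip: sum_divide_distrib)
    have g: "prob_vec (tabulate N g)"
      unfolding prob_vec_tabulate_iff
    proof
      show "\<forall>l\<in>{1..N}. 0 \<le> g l"
        using insert w' by (auto simp: g_def prob_vec_tabulate_iff intro!: sum_nonneg)
      have "sum g {1..N} = (\<Sum>i\<in>I. w' i * sum (f i) {1..N})"
        unfolding g_def by (simp add: sum_distrib_left) (rule sum.swap)
      then show "sum g {1..N} = 1" using insert w' by (simp add: prob_vec_tabulate_iff)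
    qed
    have "(\<Sum>i\<in>insert a I. w i * F (tabulate N (f i)))
        = w a * F (tabulate N (f a)) + W * (\<Sum>i\<in>I. w' i * F (tabulate N (f i)))"
      using insert W by (simp add: w'_def sum_distrib_left)
    also have "\<dots> \<le> w a * F (tabulate N (f a)) + W * F (tabulate N g)"
    proof -
      have "(\<Sum>i\<in>I. w' i * F (tabulate N (f i))) \<le> F (tabulate N g)"
        unfolding g_def by (rule insert.IH[OF w']) (use insert.prems in auto)
      then show ?thesis using W by (simp add: mult_left_mono)
    qed
    also have "\<dots> \<le> F (tabulate N (\<lambda>l. w a * f a l + (1 - w a) * g l))"
      using F_tabulate_concave[OF _ g] insert wI sum_nonneg[of I w] by (simp add: W_def)
    also have "(\<lambda>l. w a * f a l + (1 - w a) * g l) = (\<lambda>l. \<Sum>i\<in>insert a I. w i * f i l)"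
      using insert W by (simp add: g_def w'_def W_def sum_distrib_left)
    finally show ?thesis .
  qed
qed

lemma partial_sum_F_le_F_mixture:
  assumes w: "(w has_sum 1) Y" "\<And>y. y \<in> Y \<Longrightarrow> 0 \<le> w y"
    and f: "\<And>y. y \<in> Y \<Longrightarrow> prob_vec (tabulate N (f y))"
    and q: "\<And>l. l \<in> {1..N} \<Longrightarrow> ((\<lambda>y. w y * f y l) has_sum q l) Y"
    and B: "\<And>x. prob_vec x \<Longrightarrow> \<bar>F x\<bar> \<le> B"
    and S: "finite S" "S \<subseteq> Y"
  shows "(\<Sum>y\<in>S. w y * F (tabulate N (f y)) + B * w y) \<le> F (tabulate N q) + B"
proof -
  obtain g where g: "prob_vec (tabulate N g)" and "sum w S \<le> 1"
    and q_eq: "\<And>l. l \<in> {1..N} \<Longrightarrow> q l = (1 - sum w S) * g l + (\<Sum>y\<in>S. w y * f y l)"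
    using mixture_residual[OF w f q S] by blast
  define m where "m = sum w S"
  have m: "0 \<le> m" "m \<le> 1"
    using S(2) w(2) \<open>sum w S \<le> 1\<close> by (auto simp: m_def intro: sum_nonneg)
  define I where "I = insert None (Some ` S)"
  define w' where "w' i = (case i of None \<Rightarrow> 1 - m | Some y \<Rightarrow> w y)" for i
  define f' where "f' i = (case i of None \<Rightarrow> g | Some y \<Rightarrow> f y)" for i
  have sum_I: "sum h I = h None + (\<Sum>y\<in>S. h (Some y))" for h :: "'a option \<Rightarrow> real"
    using S(1) by (simp add: I_def sum.reindex)
  have "(1 - m) * F (tabulate N g) + (\<Sum>y\<in>S. w y * F (tabulate N (f y)))
      = (\<Sum>i\<in>I. w' i * F (tabulate N (f' i)))"
    by (simp add: sum_I w'_def f'_def)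
  also have "\<dots> \<le> F (tabulate N (\<lambda>l. \<Sum>i\<in>I. w' i * f' i l))"
  proof (rule sum_F_le_F_mixture)
    show "sum w' I = 1" by (simp add: sum_I w'_def m_def)
  qed (use S m w(2) f g in \<open>auto simp: I_def w'_def f'_def\<close>)
  also have "tabulate N (\<lambda>l. \<Sum>i\<in>I. w' i * f' i l) = tabulate N q"
  proof (rule tabulate_cong)
    fix l assume "l \<in> {1..N}"
    then show "(\<Sum>i\<in>I. w' i * f' i l) = q l"
      using q_eq[of l] by (simp add: sum_I w'_def f'_def m_def)
  qed
  finally have "(\<Sum>y\<in>S. w y * F (tabulate N (f y))) \<le> F (tabulate N q) - (1 - m) * F (tabulate N g)"
    by simp
  moreover have "- B \<le> F (tabulate N g)" using B[OF g] by simp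
  ultimately show ?thesis
    using m mult_left_mono[of "- B" "F (tabulate N g)" "1 - m"]
    by (simp add: sum.distrib m_def algebra_simps flip: sum_distrib_left)
qed

lemma infsum_F_le_F_mixture:
  assumes w: "(w has_sum 1) Y" "\<And>y. y \<in> Y \<Longrightarrow> 0 \<le> w y"
    and f: "\<And>y. y \<in> Y \<Longrightarrow> prob_vec (tabulate N (f y))"
    and q: "\<And>l. l \<in> {1..N} \<Longrightarrow> ((\<lambda>y. w y * f y l) has_sum q l) Y"
    and B: "\<And>x. prob_vec x \<Longrightarrow> \<bar>F x\<bar> \<le> B"
  shows "infsum (\<lambda>y. w y * F (tabulate N (f y))) Y \<le> F (tabulate N q)"
proof -
  have "(\<lambda>y. w y * F (tabulate N (f y))) summable_on Y"
    using w f B by (intro summable_on_weighted_bounded) (auto simp: summable_on_def)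
  then have "((\<lambda>y. w y * F (tabulate N (f y)) + B * w y)
      has_sum (infsum (\<lambda>y. w y * F (tabulate N (f y))) Y + B * 1)) Y"
    by (intro has_sum_add has_sum_cmult_right w(1)) auto
  then have "infsum (\<lambda>y. w y * F (tabulate N (f y))) Y + B * 1 \<le> F (tabulate N q) + B"
    by (rule has_sum_le_finite_sums) (rule partial_sum_F_le_F_mixture[OF w f q B])
  then show ?thesis by simp
qed

end

lemma obtain_subset_between:
  assumes "finite P" "T \<subseteq> P" "card T \<le> r" "r \<le> card P"
  obtains M where "T \<subseteq> M" "M \<subseteq> P" "card M = r"
proof -
  have "finite T" using assms(1,2) finite_subset by blast
  have "r - card T \<le> card (P - T)" using assms by (simp add: card_Diff_subset \<open>finite T\<close>)
  then obtain E where E: "E \<subseteq> P - T" "card E = r - card T"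
    by (meson obtain_subset_with_card_n)
  then have "card (T \<union> E) = r"
    using assms \<open>finite T\<close> by (subst card_Un_disjoint) (auto intro: finite_subset)
  then show ?thesis using that E assms(2) by blast
qed

lemma capped_vector_support:
  fixes x :: "'a \<Rightarrow> real"
  assumes X: "finite X" and x: "\<forall>i\<in>X. 0 \<le> x i \<and> x i \<le> c" and sum_x: "sum x X = real r * c"
    and "0 < c"
  obtains M where "{i\<in>X. x i = c} \<subseteq> M" "M \<subseteq> {i\<in>X. 0 < x i}" "card M = r"
proof (rule obtain_subset_between)
  define T where "T = {i\<in>X. x i = c}"
  have "real (card T) * c = sum (\<lambda>_. c) T" by simp
  also have "\<dots> = sum x T" by (rule sum.cong) (auto simp: T_def)
  also have "\<dots> \<le> sum x X" using x by (intro sum_mono2[OF X]) (auto simp: T_def)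
  also have "\<dots> = real r * c" by (rule sum_x)
  finally show "card T \<le> r" using \<open>0 < c\<close> by simp
  have "real r * c = sum x {i\<in>X. 0 < x i}"
    unfolding sum_x[symmetric] using x by (intro sum.mono_neutral_right[OF X]) auto
  also have "\<dots> \<le> real (card {i\<in>X. 0 < x i}) * c"
    using x sum_bounded_above[of "{i\<in>X. 0 < x i}" x c] by auto
  finally show "r \<le> card {i\<in>X. 0 < x i}" using \<open>0 < c\<close> by simp
  show "finite {i\<in>X. 0 < x i}" "T \<subseteq> {i\<in>X. 0 < x i}" using X \<open>0 < c\<close> by (auto simp: T_def)
qed (rule that)

lemma capped_vector_peel:
  fixes x :: "'a \<Rightarrow> real"
  assumes X: "finite X" and x: "\<forall>i\<in>X. 0 \<le> x i \<and> x i \<le> c" and sum_x: "sum x X = real r * c"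
    and "0 < c" "0 < r"
  obtains M w where "M \<subseteq> X" "card M = r" "0 < w" "w \<le> c"
    and "\<forall>i\<in>X. 0 \<le> x i - w * indicator M i \<and> x i - w * indicator M i \<le> c - w"
    and "w < c \<Longrightarrow> card {i\<in>X. 0 < x i - w * indicator M i \<and> x i - w * indicator M i < c - w}
      < card {i\<in>X. 0 < x i \<and> x i < c}"
proof -
  obtain M where M: "{i\<in>X. x i = c} \<subseteq> M" "M \<subseteq> {i\<in>X. 0 < x i}" "card M = r"
    by (rule capped_vector_support[OF X x sum_x \<open>0 < c\<close>])
  have "M \<subseteq> X" "M \<noteq> {}" "finite M" using M \<open>0 < r\<close> X by (auto intro: finite_subset)
  define V where "V = x ` M \<union> (\<lambda>i. c - x i) ` (X - M)"
  define w where "w = Min V"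
  have "finite V" "V \<noteq> {}" using X \<open>finite M\<close> \<open>M \<noteq> {}\<close> by (auto simp: V_def)
  then have "w \<in> V" and w_le: "\<And>v. v \<in> V \<Longrightarrow> w \<le> v" by (auto simp: w_def)
  have in_M: "\<And>i. i \<in> M \<Longrightarrow> 0 < x i" using M(2) by auto
  have out_M: "\<And>i. i \<in> X - M \<Longrightarrow> x i < c" using M(1) x by (auto simp: less_le)
  have w_M: "\<And>i. i \<in> M \<Longrightarrow> w \<le> x i" and w_out: "\<And>i. i \<in> X - M \<Longrightarrow> w \<le> c - x i"
    using w_le by (auto simp: V_def)
  have "0 < w" using \<open>w \<in> V\<close> in_M out_M by (auto simp: V_def)
  obtain i0 where "i0 \<in> M" using \<open>M \<noteq> {}\<close> by blast
  then have "w \<le> c" using w_M[of i0] x \<open>M \<subseteq> X\<close> by force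
  define x' where "x' i = x i - w * indicator M i" for i
  have x': "0 \<le> x' i \<and> x' i \<le> c - w" if "i \<in> X" for i
  proof (cases "i \<in> M")
    case True
    then show ?thesis using w_M[of i] x that by (simp add: x'_def)
  next
    case False
    then show ?thesis using w_out[of i] x that by (simp add: x'_def)
  qed
  have "card {i\<in>X. 0 < x' i \<and> x' i < c - w} < card {i\<in>X. 0 < x i \<and> x i < c}" if "w < c"
  proof (rule psubset_card_mono)
    have "{i\<in>X. 0 < x' i \<and> x' i < c - w} \<subseteq> {i\<in>X. 0 < x i \<and> x i < c}"
      using in_M out_M x by (auto simp: x'_def indicator_def split: if_splits)
    moreover obtain i where "i \<in> X" "0 < x i \<and> x i < c" "\<not> (0 < x' i \<and> x' i < c - w)"
    proof -
      consider (in_M) i where "i \<in> M" "w = x i" | (out_M) i where "i \<in> X - M" "w = c - x i"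
        using \<open>w \<in> V\<close> by (auto simp: V_def)
      then show thesis
      proof cases
        case in_M
        then show thesis using that[of i] \<open>M \<subseteq> X\<close> \<open>0 < w\<close> \<open>w < c\<close> by (auto simp: x'_def)
      next
        case out_M
        then show thesis using that[of i] \<open>0 < w\<close> \<open>w < c\<close> by (auto simp: x'_def)
      qed
    qed
    ultimately show "{i\<in>X. 0 < x' i \<and> x' i < c - w} \<subset> {i\<in>X. 0 < x i \<and> x i < c}"
      by blast
  qed (use X in simp)
  then show ?thesis
    using that \<open>M \<subseteq> X\<close> M(3) \<open>0 < w\<close> \<open>w \<le> c\<close> x' by (simp add: x'_def[abs_def])
qed

lemma capped_vector_decomposition:
  fixes x :: "'a \<Rightarrow> real"
  assumes X: "finite X" and "\<forall>i\<in>X. 0 \<le> x i \<and> x i \<le> c" and "sum x X = real r * c"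
  shows "\<exists>v. (\<forall>M. 0 \<le> v M) \<and> (\<forall>i\<in>X. (\<Sum>M | M \<subseteq> X \<and> card M = r \<and> i \<in> M. v M) = x i)"
  using assms(2,3)
proof (induction "card {i\<in>X. 0 < x i \<and> x i < c} + of_bool (0 < c)" arbitrary: x c
    rule: less_induct)
  case less
  show ?case
  proof (cases "0 < c \<and> 0 < r")
    case False
    then have "\<forall>i\<in>X. x i = 0"
      using less.prems X sum_nonneg_eq_0_iff[of X x] by force
    then show ?thesis by (intro exI[of _ "\<lambda>_. 0"]) simp
  next
    case True
    then have "0 < c" "0 < r" by auto
    then obtain M0 w where M0: "M0 \<subseteq> X" "card M0 = r" and w: "0 < w" "w \<le> c"
      and x': "\<forall>i\<in>X. 0 \<le> x i - w * indicator M0 i \<and> x i - w * indicator M0 i \<le> c - w"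
      and fewer: "w < c \<Longrightarrow> card {i\<in>X. 0 < x i - w * indicator M0 i \<and> x i - w * indicator M0 i < c - w}
        < card {i\<in>X. 0 < x i \<and> x i < c}"
      by (rule capped_vector_peel[OF X less.prems]) (rule that)
    define x' where "x' i = x i - w * indicator M0 i" for i
    have "(\<Sum>i\<in>X. w * indicator M0 i) = (\<Sum>i\<in>M0. w)"
      using M0 X by (intro sum.mono_neutral_cong_right) (auto simp: indicator_def)
    then have "(\<Sum>i\<in>X. w * indicator M0 i) = w * real r" using M0 by simp
    then have "sum x' X = real r * (c - w)"
      using less.prems(2) by (simp add: x'_def sum_subtractf algebra_simps)
    moreover have "card {i\<in>X. 0 < x' i \<and> x' i < c - w} + of_bool (0 < c - w)
        < card {i\<in>X. 0 < x i \<and> x i < c} + of_bool (0 < c)"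
    proof (cases "w < c")
      case False
      then have empty: "{i\<in>X. 0 < x' i \<and> x' i < c - w} = {}" and "\<not> 0 < c - w" using w by auto
      then show ?thesis using True unfolding empty by simp
    qed (use fewer True in \<open>simp add: x'_def\<close>)
    moreover have "\<forall>i\<in>X. 0 \<le> x' i \<and> x' i \<le> c - w" using x' by (simp add: x'_def)
    ultimately have "\<exists>v. (\<forall>M. 0 \<le> v M) \<and> (\<forall>i\<in>X. (\<Sum>M | M \<subseteq> X \<and> card M = r \<and> i \<in> M. v M) = x' i)"
      using less.hyps by blast
    then obtain v' where v': "\<forall>M. 0 \<le> v' M"
      "\<forall>i\<in>X. (\<Sum>M | M \<subseteq> X \<and> card M = r \<and> i \<in> M. v' M) = x' i"
      by blast
    define v where "v M = v' M + w * indicator {M0} M" for M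
    have "finite {M. M \<subseteq> X \<and> card M = r \<and> i \<in> M}" for i
      using X by (rule rev_finite_subset[OF finite_Pow_iff[THEN iffD2]]) auto
    then have "(\<Sum>M | M \<subseteq> X \<and> card M = r \<and> i \<in> M. v M) = x i" if "i \<in> X" for i
      using v' that M0 by (simp add: v_def sum.distrib x'_def indicator_def sum.delta)
    moreover have "\<forall>M. 0 \<le> v M" using v' w by (simp add: v_def)
    ultimately show ?thesis by blast
  qed
qed

lemma divide_diff_mono:
  fixes a b M K :: real
  assumes "a \<le> b" "b < K" "b \<le> M" "M \<le> K"
  shows "(M - b) / (K - b) \<le> (M - a) / (K - a)"
proof -
  have "(M - b) * (K - a) \<le> (M - a) * (K - b)"
    using assms mult_right_mono[of a b "K - M"] by (simp add: algebra_simps)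
  then show ?thesis using assms by (simp add: divide_simps)
qed

lemma sum_if_less:
  fixes j m :: nat
  assumes "j \<le> m + 1"
  shows "(\<Sum>l\<in>{1..m}. if l < j then f l else 0) = sum f {1..<j}"
proof -
  have "x \<le> m" if "x < j" for x using that assms by linarith
  then have "{1..m} \<inter> {l. l < j} = {1..<j}" by auto
  then show ?thesis using sum.inter_restrict[of "{1..m}" f "{l. l < j}"] by simp
qed

locale sorted_prior =
  fixes n k :: nat and p :: "nat \<Rightarrow> real"
  assumes k_pos: "0 < k" and k_less: "k < n"
    and p_step: "\<forall>i\<in>{1..<n}. p (i + 1) \<le> p i"
    and p_n_pos: "0 < p n"
    and p_sum: "(\<Sum>i=1..n. p i) = 1"
begin

text \<open>In the paper's notation: j = j*, T is the tail mass from j* on, and pi consists of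
  p(1), ..., p(j* - 1) followed by r = k - j* + 1 copies of level.\<close>

abbreviation "j \<equiv> jstar p n k"
abbreviation "T \<equiv> tail_mass p n j"
abbreviation "r \<equiv> k + 1 - j"
definition level :: real where
  "level = T / (real k - real j + 1)"

lemma p_antimono:
  assumes "1 \<le> i" "i \<le> l" "l \<le> n"
  shows "p l \<le> p i"
  using assms(2,3)
proof (induction l rule: dec_induct)
  case (step l)
  then have "l \<in> {1..<n}" using assms(1) by simp
  then have "p (l + 1) \<le> p l" using p_step by blast
  then show ?case using step by simp
qed simp

lemma p_pos: "i \<in> {1..n} \<Longrightarrow> 0 < p i"
  using p_antimono[of i n] p_n_pos by (simp add: order_less_le_trans)

lemma p_le_tail_mass: "1 \<le> i \<Longrightarrow> i \<le> n \<Longrightarrow> p i \<le> tail_mass p n i"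
  unfolding tail_mass_def using p_pos by (intro member_le_sum) (auto intro: less_imp_le)

lemma jstar_exists: "\<exists>i. 1 \<le> i \<and> i \<le> k \<and> p i \<le> tail_mass p n i / (real k - real i + 1)"
  using p_le_tail_mass[of k] k_pos k_less by (intro exI[of _ k]) auto

lemma j_bounds: "1 \<le> j" "j \<le> k" and p_j_le: "p j \<le> level"
  using LeastI_ex[OF jstar_exists] by (auto simp: jstar_def level_def)

lemma real_r: "real r = real k - real j + 1"
  using j_bounds by (simp add: of_nat_diff)

lemma r_pos: "0 < r"
  using j_bounds by simp

lemma r_times_level: "real r * level = T"
  using r_pos by (simp add: level_def real_r[symmetric])

lemma T_pos: "0 < T"
  using p_le_tail_mass[of j] p_pos[of j] j_bounds k_less by simp

lemma level_pos: "0 < level"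
  using T_pos j_bounds by (simp add: level_def)

lemma sum_p_head: "sum p {1..<j} = 1 - T"
proof -
  have "{1..n} = {1..<j} \<union> {j..n}" using j_bounds k_less by auto
  then have "sum p {1..n} = sum p {1..<j} + T"
    by (simp add: tail_mass_def sum.union_disjoint ivl_disj_int)
  then show ?thesis using p_sum by simp
qed

text \<open>Minimality of j* at j* - 1 is what places the head entries strictly above the level.\<close>

lemma level_less_p_head:
  assumes "1 \<le> i" "i < j"
  shows "level < p i"
proof -
  define i' where "i' = j - 1"
  have i': "1 \<le> i'" "i' < j" "j = i' + 1" "i' \<le> k" using assms j_bounds by (auto simp: i'_def)
  have "\<not> (1 \<le> i' \<and> i' \<le> k \<and> p i' \<le> tail_mass p n i' / (real k - real i' + 1))"
    using not_less_Least[of i' "\<lambda>i. 1 \<le> i \<and> i \<le> k \<and> p i \<le> tail_mass p n i / (real k - real i + 1)"]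
      i'(2) unfolding jstar_def by blast
  then have "\<not> p i' \<le> tail_mass p n i' / (real k - real i' + 1)" using i' by blast
  moreover have "tail_mass p n i' = p i' + T"
  proof -
    have "{i'..n} = insert i' {j..n}" using i' j_bounds k_less by auto
    then show ?thesis using i' by (simp add: tail_mass_def)
  qed
  moreover have "0 < real k - real i' + 1" using i' by simp
  ultimately have "p i' + T < p i' * (real k - real i' + 1)"
    by (simp add: not_le divide_less_eq)
  then have "T < p i' * (real k - real j + 1)"
    using i' by (simp add: algebra_simps)
  then have "level < p i'"
    using j_bounds by (simp add: level_def divide_less_eq)
  also have "p i' \<le> p i" using p_antimono[of i i'] assms i' j_bounds k_less by simp
  finally show ?thesis .
qed

definition pi_ext :: "nat \<Rightarrow> real" where
  "pi_ext l = (if l < j then p l else if l \<le> k then level else 0)"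

lemma pi_vec_eq: "pi_vec p n k = tabulate k pi_ext"
  unfolding pi_vec_def tabulate_def pi_ext_def level_def by (intro map_cong) auto

lemma pi_ext_nonneg: "1 \<le> l \<Longrightarrow> 0 \<le> pi_ext l"
  using p_pos[of l] level_pos j_bounds k_less by (auto simp: pi_ext_def)

lemma pi_ext_antimono:
  assumes "1 \<le> i" "i \<le> l" "l \<le> n"
  shows "pi_ext l \<le> pi_ext i"
  using assms p_antimono[of i l] level_less_p_head[of i] pi_ext_nonneg[of i] j_bounds
  by (auto simp: pi_ext_def)

lemma sum_pi_ext: "sum pi_ext {1..l} = sum p {1..<j} + real (min l k + 1 - j) * level"
  if "j \<le> l + 1" for l
proof -
  have "{1..l} = {1..<j} \<union> {j..l}" using that j_bounds by auto
  then have "sum pi_ext {1..l} = sum pi_ext {1..<j} + sum pi_ext {j..l}"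
    by (simp add: sum.union_disjoint[symmetric] ivl_disj_int)
  also have "sum pi_ext {1..<j} = sum p {1..<j}" by (intro sum.cong) (auto simp: pi_ext_def)
  also have "sum pi_ext {j..l} = sum (\<lambda>_. level) {j..min l k}"
    by (rule sum.mono_neutral_cong_right) (auto simp: pi_ext_def)
  finally show ?thesis by simp
qed

lemma prob_vec_pi_ext:
  assumes "k \<le> N" shows "prob_vec (tabulate N pi_ext)"
proof -
  have "sum pi_ext {1..N} = 1 - T + real r * level"
    using sum_pi_ext[of N] sum_p_head j_bounds assms by (simp add: min_absorb2)
  also have "\<dots> = 1" using r_times_level by simp
  finally show ?thesis using pi_ext_nonneg by (simp add: prob_vec_tabulate_iff)
qed

text \<open>The fraction of the tail mass T that pi places among its first m coordinates.\<close>

definition tail_share :: "nat \<Rightarrow> real" where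
  "tail_share m = (if m < j then 0 else real (min m k + 1 - j) / real r)"

lemma sum_pi_ext_eq_tail_share: "sum pi_ext {1..m} = (\<Sum>l\<in>{1..m}. if l < j then p l else 0) + tail_share m * T"
proof (cases "m < j")
  case True
  then show ?thesis by (simp add: tail_share_def pi_ext_def)
next
  case False
  have "(\<Sum>l\<in>{1..m}. if l < j then p l else 0) = sum p {1..<j}"
    using False by (intro sum_if_less) simp
  moreover have "tail_share m * T = real (min m k + 1 - j) * level"
    using False r_pos by (simp add: tail_share_def flip: r_times_level)
  ultimately show ?thesis using False sum_pi_ext[of m] by simp
qed

lemma Mstar_split:
  assumes "M \<in> Mstar n k j"
  shows "M = {1..<j} \<union> (M \<inter> {j..n})" "card (M \<inter> {j..n}) = r" "M \<subseteq> {1..n}" "card M = k"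
proof -
  have M: "M \<subseteq> {1..n}" "card M = k" "{1..<j} \<subseteq> M" using assms by (auto simp: Mstar_def)
  show eq: "M = {1..<j} \<union> (M \<inter> {j..n})" using M by auto
  have "card M = card {1..<j} + card (M \<inter> {j..n})"
    by (subst eq, rule card_Un_disjoint) (use M finite_subset in auto)
  then show "card (M \<inter> {j..n}) = r" using M j_bounds by simp
  show "M \<subseteq> {1..n}" "card M = k" using M by auto
qed

lemma head_union_in_Mstar:
  assumes "M' \<subseteq> {j..n}" "card M' = r"
  shows "{1..<j} \<union> M' \<in> Mstar n k j"
proof -
  have "card ({1..<j} \<union> M') = card {1..<j} + card M'"
    by (rule card_Un_disjoint) (use assms finite_subset in auto)
  then show ?thesis using assms j_bounds k_less by (auto simp: Mstar_def)
qed

lemma finite_Mstar: "finite (Mstar n k j)"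
  by (rule finite_subset[of _ "Pow {1..n}"]) (auto simp: Mstar_def)

lemma lin_sol_exists: "\<exists>v. lin_sol p n k v"
proof -
  have "0 \<le> p i \<and> p i \<le> level" if "i \<in> {j..n}" for i
  proof -
    have "p i \<le> p j" using p_antimono[of j i] that j_bounds by simp
    moreover have "0 < p i" using p_pos[of i] that j_bounds by simp
    ultimately show ?thesis using p_j_le by simp
  qed
  moreover have "sum p {j..n} = real r * level" using r_times_level by (simp add: tail_mass_def)
  ultimately have "\<exists>v'. (\<forall>M. 0 \<le> v' M) \<and>
      (\<forall>i\<in>{j..n}. (\<Sum>M | M \<subseteq> {j..n} \<and> card M = r \<and> i \<in> M. v' M) = p i)"
    by (intro capped_vector_decomposition[of "{j..n}" p level r]) auto
  then obtain v' where v': "\<forall>M. 0 \<le> v' M"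
    "\<forall>i\<in>{j..n}. (\<Sum>M | M \<subseteq> {j..n} \<and> card M = r \<and> i \<in> M. v' M) = p i"
    by blast
  define v where "v M = v' (M \<inter> {j..n})" for M
  have "sum v {M \<in> Mstar n k j. i \<in> M} = p i" if i: "i \<in> {j..n}" for i
  proof -
    have "sum v {M \<in> Mstar n k j. i \<in> M} = (\<Sum>M | M \<subseteq> {j..n} \<and> card M = r \<and> i \<in> M. v' M)"
    proof (rule sum.reindex_bij_witness[where i = "\<lambda>M'. {1..<j} \<union> M'" and j = "\<lambda>M. M \<inter> {j..n}"])
      fix M assume "M \<in> {M \<in> Mstar n k j. i \<in> M}"
      then show "{1..<j} \<union> M \<inter> {j..n} = M" "M \<inter> {j..n} \<in> {M'. M' \<subseteq> {j..n} \<and> card M' = r \<and> i \<in> M'}"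
        "v' (M \<inter> {j..n}) = v M"
        using Mstar_split[of M] i by (auto simp: v_def)
    next
      fix M' assume "M' \<in> {M'. M' \<subseteq> {j..n} \<and> card M' = r \<and> i \<in> M'}"
      then show "({1..<j} \<union> M') \<inter> {j..n} = M'" "{1..<j} \<union> M' \<in> {M \<in> Mstar n k j. i \<in> M}"
        using head_union_in_Mstar[of M'] by auto
    qed
    then show ?thesis using v' i by simp
  qed
  then have "lin_sol p n k v" using v' by (simp add: lin_sol_def v_def)
  then show ?thesis by blast
qed

lemma image_mset_head_level:
  assumes S: "S \<subseteq> {j..n}" "card S = r"
    and g: "\<And>x. x \<in> {1..<j} \<Longrightarrow> g x = p x" "\<And>x. x \<in> S \<Longrightarrow> g x = level"
  shows "image_mset g (mset_set ({1..<j} \<union> S))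
    = image_mset p (mset_set {1..<j}) + replicate_mset r level"
proof -
  have "finite S" using S(1) finite_subset by blast
  then have "mset_set ({1..<j} \<union> S) = mset_set {1..<j} + mset_set S"
    using S(1) by (intro mset_set_Union) auto
  moreover have "image_mset g (mset_set {1..<j}) = image_mset p (mset_set {1..<j})"
    by (intro image_mset_cong) (simp add: g(1))
  moreover have "image_mset g (mset_set S) = image_mset (\<lambda>_. level) (mset_set S)"
    using \<open>finite S\<close> by (intro image_mset_cong) (simp add: g(2))
  ultimately show ?thesis using S(2) by (simp add: image_mset_const_eq)
qed

lemma mset_pi_ext:
  "mset (tabulate n pi_ext)
    = image_mset p (mset_set {1..<j}) + replicate_mset r level + replicate_mset (n - k) 0"
proof -
  have "mset (tabulate n pi_ext)
      = image_mset pi_ext (mset_set {1..k}) + replicate_mset (n - card {1..k}) 0"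
    using k_less j_bounds by (intro mset_tabulate_supported) (auto simp: pi_ext_def)
  moreover have "image_mset pi_ext (mset_set {1..k})
      = image_mset p (mset_set {1..<j}) + replicate_mset r level"
  proof -
    have "{1..k} = {1..<j} \<union> {j..k}" using j_bounds by auto
    moreover have "image_mset pi_ext (mset_set ({1..<j} \<union> {j..k}))
        = image_mset p (mset_set {1..<j}) + replicate_mset r level"
      using k_less by (intro image_mset_head_level) (auto simp: pi_ext_def)
    ultimately show ?thesis by simp
  qed
  ultimately show ?thesis by simp
qed

context
  fixes v assumes v: "lin_sol p n k v"
begin

lemma v_nonneg: "M \<in> Mstar n k j \<Longrightarrow> 0 \<le> v M"
  using v by (simp add: lin_sol_def)

lemma sum_v_containing: "i \<in> {j..n} \<Longrightarrow> sum v {M \<in> Mstar n k j. i \<in> M} = p i"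
  using v by (simp add: lin_sol_def)

text \<open>Double counting: each M in Mstar contains exactly r indices of the tail {j..n}.\<close>

lemma sum_v: "sum v (Mstar n k j) = level"
proof -
  have "T = (\<Sum>i\<in>{j..n}. \<Sum>M\<in>{M \<in> Mstar n k j. i \<in> M}. v M)"
    by (simp add: tail_mass_def sum_v_containing)
  also have "\<dots> = (\<Sum>M\<in>Mstar n k j. \<Sum>i\<in>{i \<in> {j..n}. i \<in> M}. v M)"
    using finite_Mstar by (intro sum.swap_restrict) auto
  also have "\<dots> = (\<Sum>M\<in>Mstar n k j. real r * v M)"
  proof (rule sum.cong)
    fix M assume "M \<in> Mstar n k j"
    then have "card {i \<in> {j..n}. i \<in> M} = r"
      using Mstar_split(2)[of M] by (simp add: Int_def conj_commute)
    then show "(\<Sum>i\<in>{i \<in> {j..n}. i \<in> M}. v M) = real r * v M" by simp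
  qed simp
  finally have "real r * sum v (Mstar n k j) = real r * level"
    using r_times_level by (simp add: sum_distrib_left)
  then show ?thesis using r_pos by simp
qed

lemma opt_channel_eq:
  "opt_channel p n k v i M =
    (if M \<in> Mstar n k j then
       if j \<le> i \<and> i \<le> n \<and> i \<in> M then v M / p i
       else if 1 \<le> i \<and> i < j then v M / level
       else 0
     else 0)"
  by (simp add: opt_channel_def Let_def level_def)

lemma opt_channel_nonneg: "0 \<le> opt_channel p n k v i M"
  using v_nonneg[of M] p_pos[of i] level_pos j_bounds by (auto simp: opt_channel_eq)

lemma opt_channel_row_sum:
  assumes i: "i \<in> {1..n}"
  shows "(opt_channel p n k v i has_sum 1) UNIV"
proof -
  have "sum (opt_channel p n k v i) (Mstar n k j) = 1"
  proof (cases "j \<le> i")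
    case True
    then have "sum (opt_channel p n k v i) (Mstar n k j) = (\<Sum>M\<in>Mstar n k j. if i \<in> M then v M / p i else 0)"
      using i by (intro sum.cong) (auto simp: opt_channel_eq)
    also have "\<dots> = (\<Sum>M\<in>{M \<in> Mstar n k j. i \<in> M}. v M / p i)"
      using finite_Mstar by (simp add: sum.inter_filter)
    also have "\<dots> = 1"
      using True i p_pos[of i] by (simp add: sum_v_containing flip: sum_divide_distrib)
    finally show ?thesis .
  next
    case False
    then have "sum (opt_channel p n k v i) (Mstar n k j) = (\<Sum>M\<in>Mstar n k j. v M / level)"
      using i by (intro sum.cong) (auto simp: opt_channel_eq)
    then show ?thesis using level_pos by (simp add: sum_v flip: sum_divide_distrib)
  qed
  then have "(opt_channel p n k v i has_sum 1) (Mstar n k j)"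
    using finite_Mstar by (simp add: has_sum_finiteI)
  moreover have "opt_channel p n k v i M = 0" if "M \<notin> Mstar n k j" for M
    using that by (simp add: opt_channel_eq)
  ultimately show ?thesis
    by (subst has_sum_cong_neutral[where T = "Mstar n k j" and g = "opt_channel p n k v i"]) auto
qed

lemma preim_opt_channel_subset: "preim n (opt_channel p n k v) M \<subseteq> M"
proof
  fix i assume "i \<in> preim n (opt_channel p n k v) M"
  then have pos: "0 < opt_channel p n k v i M" and i: "1 \<le> i" "i \<le> n"
    by (simp_all add: preim_def)
  then have M: "M \<in> Mstar n k j" by (cases "M \<in> Mstar n k j") (simp_all add: opt_channel_eq)
  show "i \<in> M"
  proof (cases "i < j")
    case True
    then show ?thesis using M i by (auto simp: Mstar_def)
  next
    case False
    then show ?thesis using pos M by (cases "i \<in> M") (simp_all add: opt_channel_eq)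
  qed
qed

lemma feasible_opt_channel: "feasible n k (opt_channel p n k v)"
  unfolding feasible_def channel_def
proof (intro conjI ballI allI)
  fix M
  show "card (preim n (opt_channel p n k v) M) \<le> k"
  proof (cases "M \<in> Mstar n k j")
    case True
    then show ?thesis
      using preim_opt_channel_subset[of M] Mstar_split(3,4)[OF True]
      by (metis card_mono finite_atLeastAtMost finite_subset)
  next
    case False
    then have "preim n (opt_channel p n k v) M = {}"
      by (auto simp: preim_def opt_channel_eq)
    then show ?thesis by simp
  qed
qed (auto simp: opt_channel_nonneg opt_channel_row_sum)

lemma out_prob_opt_channel:
  "out_prob p n (opt_channel p n k v) M = (if M \<in> Mstar n k j then v M / level else 0)"
proof (cases "M \<in> Mstar n k j")
  case True
  have "{1..n} = {1..<j} \<union> {j..n}" using j_bounds k_less by auto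
  then have "out_prob p n (opt_channel p n k v) M
      = (\<Sum>x\<in>{1..<j}. p x * opt_channel p n k v x M) + (\<Sum>x\<in>{j..n}. p x * opt_channel p n k v x M)"
    by (simp add: out_prob_def sum.union_disjoint ivl_disj_int)
  also have "(\<Sum>x\<in>{1..<j}. p x * opt_channel p n k v x M) = (\<Sum>x\<in>{1..<j}. p x * (v M / level))"
    using True by (intro sum.cong) (auto simp: opt_channel_eq)
  also have "\<dots> = (1 - T) * (v M / level)"
    by (simp only: sum_p_head flip: sum_distrib_right)
  also have "(\<Sum>x\<in>{j..n}. p x * opt_channel p n k v x M) = (\<Sum>x\<in>{j..n} \<inter> M. v M)"
  proof -
    have "(\<Sum>x\<in>{j..n}. p x * opt_channel p n k v x M) = (\<Sum>x\<in>{j..n}. if x \<in> M then v M else 0)"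
    proof (rule sum.cong)
      fix x assume "x \<in> {j..n}"
      then have "p x \<noteq> 0" using p_pos[of x] j_bounds by simp
      then show "p x * opt_channel p n k v x M = (if x \<in> M then v M else 0)"
        using True \<open>x \<in> {j..n}\<close> by (simp add: opt_channel_eq)
    qed simp
    then show ?thesis using sum.inter_restrict[of "{j..n}" "\<lambda>_. v M" M] by simp
  qed
  also have "\<dots> = T * (v M / level)"
    using Mstar_split(2)[OF True] r_times_level level_pos by (simp add: Int_commute field_simps)
  finally show ?thesis using True by (simp add: algebra_simps)
qed (simp add: out_prob_def opt_channel_eq)

lemma mset_posterior_opt_channel:
  assumes M: "M \<in> Mstar n k j" and pos: "0 < v M"
  shows "mset (posterior p n (opt_channel p n k v) M) = mset (tabulate n pi_ext)"
proof -
  define g where "g x = p x * opt_channel p n k v x M / (v M / level)" for x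
  have post: "posterior p n (opt_channel p n k v) M = tabulate n g"
    by (simp add: posterior_def tabulate_def g_def out_prob_opt_channel M)
  have "mset (tabulate n g) = image_mset g (mset_set M) + replicate_mset (n - k) 0"
    using Mstar_split(3,4)[OF M] Mstar_split(1)[OF M]
    by (subst mset_tabulate_supported[of M]) (auto simp: g_def opt_channel_eq)
  also have "image_mset g (mset_set M) = image_mset p (mset_set {1..<j}) + replicate_mset r level"
  proof (subst Mstar_split(1)[OF M], rule image_mset_head_level)
    show "M \<inter> {j..n} \<subseteq> {j..n}" "card (M \<inter> {j..n}) = r" using Mstar_split(2)[OF M] by auto
    show "g x = p x" if "x \<in> {1..<j}" for x
      using that M pos level_pos by (simp add: g_def opt_channel_eq)
    show "g x = level" if "x \<in> M \<inter> {j..n}" for x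
      using that M pos level_pos p_pos[of x] j_bounds by (simp add: g_def opt_channel_eq)
  qed
  finally show ?thesis using post mset_pi_ext by simp
qed

end

lemma F_pi_ext_eq:
  assumes "symmetric_concave F"
  shows "F (tabulate n pi_ext) = F (pi_vec p n k)"
proof -
  interpret symmetric_concave F by fact
  show ?thesis
    using k_less j_bounds
    by (simp add: pi_vec_eq F_tabulate_pad_zeros[OF prob_vec_pi_ext] pi_ext_def)
qed

lemma infsum_F_posterior_opt_channel:
  assumes F: "symmetric_concave F" and v: "lin_sol p n k v"
  shows "infsum (\<lambda>y. out_prob p n (opt_channel p n k v) y * F (posterior p n (opt_channel p n k v) y))
      {y. 0 < out_prob p n (opt_channel p n k v) y} = F (pi_vec p n k)"
proof -
  interpret symmetric_concave F by fact
  define S where "S = {M \<in> Mstar n k j. 0 < v M}"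
  have S: "{y. 0 < out_prob p n (opt_channel p n k v) y} = S"
    using level_pos by (auto simp: S_def out_prob_opt_channel[OF v] zero_less_divide_iff)
  have "F (posterior p n (opt_channel p n k v) M) = F (pi_vec p n k)" if "M \<in> S" for M
    using that k_less F_mset_eq[OF prob_vec_pi_ext mset_posterior_opt_channel[OF v]] F_pi_ext_eq[OF F]
    by (simp add: S_def)
  then have "infsum (\<lambda>y. out_prob p n (opt_channel p n k v) y * F (posterior p n (opt_channel p n k v) y)) S
      = (\<Sum>M\<in>S. v M / level) * F (pi_vec p n k)"
    using finite_Mstar by (simp add: S_def out_prob_opt_channel[OF v] sum_distrib_right)
  also have "(\<Sum>M\<in>S. v M / level) = (\<Sum>M\<in>Mstar n k j. v M / level)"
    using finite_Mstar v_nonneg[OF v] by (intro sum.mono_neutral_left) (auto simp: S_def less_le)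
  also have "\<dots> = 1"
    using sum_v[OF v] level_pos by (simp flip: sum_divide_distrib)
  finally show ?thesis by (simp add: S)
qed

end

locale feasible_channel = sorted_prior +
  fixes W :: "nat \<Rightarrow> 'y \<Rightarrow> real"
  assumes feasible: "feasible n k W"
begin

abbreviation "out \<equiv> out_prob p n W"

definition post :: "'y \<Rightarrow> nat \<Rightarrow> real" where
  "post y x = p x * W x y / out y"

lemma W_nonneg: "x \<in> {1..n} \<Longrightarrow> 0 \<le> W x y"
  using feasible by (simp add: feasible_def channel_def)

lemma W_has_sum: "x \<in> {1..n} \<Longrightarrow> (W x has_sum 1) UNIV"
  using feasible by (simp add: feasible_def channel_def)

lemma out_nonneg: "0 \<le> out y"
  unfolding out_prob_def using W_nonneg p_pos by (intro sum_nonneg) (simp add: less_imp_le)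

lemma posterior_eq: "posterior p n W y = tabulate n (post y)"
  by (simp add: posterior_def tabulate_def post_def)

lemma joint_zero_if_out_zero: "out y = 0 \<Longrightarrow> x \<in> {1..n} \<Longrightarrow> p x * W x y = 0"
  unfolding out_prob_def using W_nonneg p_pos
  by (subst (asm) sum_nonneg_eq_0_iff) (auto simp: less_imp_le)

lemma has_sum_out_post:
  assumes x: "x \<in> {1..n}"
  shows "((\<lambda>y. out y * post y x) has_sum p x) {y. 0 < out y}"
proof -
  have "((\<lambda>y. p x * W x y) has_sum p x) UNIV"
    using has_sum_cmult_right[OF W_has_sum[OF x], of "p x"] by simp
  moreover have "p x * W x y = 0" if "y \<notin> {y. 0 < out y}" for y
    using that out_nonneg[of y] joint_zero_if_out_zero[OF _ x] by (simp add: not_less)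
  ultimately show ?thesis
    by (subst has_sum_cong_neutral[where T = UNIV and g = "\<lambda>y. p x * W x y"]) (auto simp: post_def)
qed

lemma out_has_sum: "(out has_sum 1) {y. 0 < out y}"
proof -
  have "((\<lambda>y. \<Sum>x\<in>{1..n}. out y * post y x) has_sum (\<Sum>x\<in>{1..n}. p x)) {y. 0 < out y}"
    by (intro has_sum_sum) (auto intro: has_sum_out_post)
  moreover have "(\<Sum>x\<in>{1..n}. out y * post y x) = out y" if "0 < out y" for y
    using that by (simp add: post_def out_prob_def flip: sum_distrib_left sum_divide_distrib)
  ultimately have "(out has_sum (\<Sum>x\<in>{1..n}. p x)) {y. 0 < out y}"
    using has_sum_cong[of "{y. 0 < out y}" "\<lambda>y. \<Sum>x\<in>{1..n}. out y * post y x" out] by simp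
  then show ?thesis using p_sum by simp
qed

lemma prob_vec_post:
  assumes "0 < out y"
  shows "prob_vec (tabulate n (post y))"
  unfolding prob_vec_tabulate_iff
proof
  show "\<forall>x\<in>{1..n}. 0 \<le> post y x"
    using assms W_nonneg p_pos by (auto simp: post_def less_imp_le)
  have "sum (post y) {1..n} = out y / out y"
    unfolding post_def by (simp only: sum_divide_distrib[symmetric] out_prob_def)
  then show "sum (post y) {1..n} = 1" using assms by simp
qed

lemma post_zero: "x \<in> {1..n} - preim n W y \<Longrightarrow> post y x = 0"
  using W_nonneg[of x y] by (simp add: preim_def post_def)

definition head_support :: "'y \<Rightarrow> nat set" where
  "head_support y = preim n W y \<inter> {1..<j}"

definition tail_support :: "'y \<Rightarrow> nat set" where
  "tail_support y = preim n W y \<inter> {j..n}"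

definition free_slots :: "'y \<Rightarrow> nat set" where
  "free_slots y = {1..k} - head_support y"

definition tail_post :: "'y \<Rightarrow> real" where
  "tail_post y = sum (post y) {j..n}"

definition flat_post :: "'y \<Rightarrow> nat \<Rightarrow> real" where
  "flat_post y l = (if l \<in> head_support y then post y l
     else if l \<in> free_slots y then tail_post y / card (free_slots y) else 0)"

lemma card_head_support: "card (head_support y) < j"
proof -
  have "card (head_support y) \<le> card {1..<j}"
    by (rule card_mono) (auto simp: head_support_def)
  then show ?thesis using j_bounds by simp
qed

lemma card_free_slots: "card (free_slots y) = k - card (head_support y)"
proof -
  have "head_support y \<subseteq> {1..k}" using j_bounds by (auto simp: head_support_def)
  then show ?thesis by (simp add: free_slots_def card_Diff_subset finite_subset)
qed

lemma card_tail_support_le: "card (tail_support y) \<le> card (free_slots y)"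
proof -
  have "preim n W y = head_support y \<union> tail_support y"
    using j_bounds by (auto simp: preim_def head_support_def tail_support_def)
  then have "card (preim n W y) = card (head_support y) + card (tail_support y)"
    by (simp only:) (rule card_Un_disjoint, auto simp: head_support_def tail_support_def preim_def)
  moreover have "card (preim n W y) \<le> k" using feasible by (simp add: feasible_def)
  moreover have "card (head_support y) \<le> k" using card_head_support[of y] j_bounds by simp
  ultimately show ?thesis by (simp add: card_free_slots le_diff_conv2)
qed

lemma tail_post_eq: "tail_post y = sum (post y) (tail_support y)"
  unfolding tail_post_def tail_support_def
  using j_bounds by (intro sum.mono_neutral_right ballI post_zero) auto

lemma tail_post_nonneg: "0 < out y \<Longrightarrow> 0 \<le> tail_post y"
  using prob_vec_post[of y] j_bounds
  by (auto simp: tail_post_def prob_vec_tabulate_iff intro!: sum_nonneg)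

lemma flat_post_eq: "flat_post y l = (if l \<in> head_support y then post y l else 0)
    + (if l \<in> free_slots y then tail_post y / card (free_slots y) else 0)"
  by (simp add: flat_post_def free_slots_def)

lemma sum_post_head_support:
  "(\<Sum>l\<in>{1..m}. if l < j then post y l else 0) = (\<Sum>l\<in>{1..m}. if l \<in> head_support y then post y l else 0)"
  using post_zero[of _ y] k_less j_bounds by (intro sum.cong) (auto simp: head_support_def)

lemma prob_vec_flat_post:
  assumes y: "0 < out y"
  shows "prob_vec (tabulate n (flat_post y))"
  unfolding prob_vec_tabulate_iff
proof
  show "\<forall>l\<in>{1..n}. 0 \<le> flat_post y l"
    using prob_vec_post[OF y] tail_post_nonneg[OF y] by (auto simp: flat_post_def prob_vec_tabulate_iff)
  have "free_slots y \<subseteq> {1..n}" using k_less by (auto simp: free_slots_def)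
  then have "(\<Sum>l\<in>{1..n}. if l \<in> free_slots y then tail_post y / card (free_slots y) else 0) = tail_post y"
    using card_free_slots[of y] card_head_support[of y] j_bounds
    by (simp add: sum.If_cases Int_absorb1)
  moreover have "(\<Sum>l\<in>{1..n}. if l \<in> head_support y then post y l else 0) + tail_post y = 1"
  proof -
    have "{1..n} = {1..<j} \<union> {j..n}" using j_bounds k_less by auto
    then have "sum (post y) {1..n} = sum (post y) {1..<j} + tail_post y"
      by (simp add: tail_post_def sum.union_disjoint ivl_disj_int)
    moreover have "(\<Sum>l\<in>{1..n}. if l < j then post y l else 0) = sum (post y) {1..<j}"
      using j_bounds k_less by (intro sum_if_less) simp
    ultimately show ?thesis
      using prob_vec_post[OF y] sum_post_head_support[of y n] by (simp add: prob_vec_tabulate_iff)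
  qed
  ultimately show "sum (flat_post y) {1..n} = 1"
    by (simp add: flat_post_eq sum.distrib)
qed

lemma sum_flat_post_ge:
  assumes y: "0 < out y"
  shows "(\<Sum>l\<in>{1..m}. if l < j then post y l else 0) + tail_share m * tail_post y \<le> sum (flat_post y) {1..m}"
proof -
  define a where "a = tail_post y / card (free_slots y)"
  define h where "h = card (head_support y)"
  have "h < j" "j \<le> k" using card_head_support[of y] j_bounds by (simp_all add: h_def)
  have "0 \<le> a" using tail_post_nonneg[OF y] by (simp add: a_def)
  have free_sum: "(\<Sum>l\<in>{1..m}. if l \<in> free_slots y then a else 0) = a * card ({1..m} \<inter> free_slots y)"
    using sum.inter_restrict[of "{1..m}" "\<lambda>_. a" "free_slots y"] by (simp add: mult.commute)
  have sum_flat: "sum (flat_post y) {1..m}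
      = (\<Sum>l\<in>{1..m}. if l < j then post y l else 0) + a * card ({1..m} \<inter> free_slots y)"
    unfolding sum_post_head_support[of y m] free_sum[symmetric] unfolding flat_post_eq a_def by (rule sum.distrib)
  have "tail_share m * tail_post y \<le> a * card ({1..m} \<inter> free_slots y)"
  proof (cases "m < j")
    case True
    then show ?thesis using \<open>0 \<le> a\<close> by (simp add: tail_share_def)
  next
    case False
    define M where "M = min m k"
    have "head_support y \<subseteq> {1..M}" using False \<open>j \<le> k\<close> by (auto simp: head_support_def M_def)
    moreover have "{1..m} \<inter> free_slots y = {1..M} - head_support y"
      by (auto simp: free_slots_def M_def)
    ultimately have card_I: "card ({1..m} \<inter> free_slots y) = M - h"
      by (simp add: card_Diff_subset finite_subset h_def)
    have "h \<le> M" "j \<le> M" "M \<le> k" using \<open>h < j\<close> False \<open>j \<le> k\<close> by (auto simp: M_def)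
    have "(real M - (real j - 1)) / (real k - (real j - 1)) \<le> (real M - real h) / (real k - real h)"
      using \<open>h < j\<close> \<open>j \<le> M\<close> \<open>M \<le> k\<close> j_bounds by (intro divide_diff_mono) auto
    then have "tail_share m \<le> (real M - real h) / (real k - real h)"
      using False \<open>j \<le> M\<close> by (simp add: tail_share_def real_r M_def of_nat_diff algebra_simps)
    then have "tail_share m * tail_post y \<le> (real M - real h) / (real k - real h) * tail_post y"
      using tail_post_nonneg[OF y] by (rule mult_right_mono)
    also have "\<dots> = a * (real M - real h)"
      using \<open>h < j\<close> \<open>j \<le> k\<close> by (simp add: a_def card_free_slots h_def of_nat_diff)
    also have "\<dots> = a * card ({1..m} \<inter> free_slots y)"
      using card_I \<open>h \<le> M\<close> by (simp add: of_nat_diff)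
    finally show ?thesis .
  qed
  then show ?thesis using sum_flat by simp
qed

definition mixture :: "nat \<Rightarrow> real" where
  "mixture l = infsum (\<lambda>y. out y * flat_post y l) {y. 0 < out y}"

lemma has_sum_mixture:
  assumes "l \<in> {1..n}"
  shows "((\<lambda>y. out y * flat_post y l) has_sum mixture l) {y. 0 < out y}"
proof -
  have "out summable_on {y. 0 < out y}" using out_has_sum by (auto simp: summable_on_def)
  then have "(\<lambda>y. out y * flat_post y l) summable_on {y. 0 < out y}"
    using assms out_nonneg prob_vec_flat_post by (intro mixture_summable[where N = n]) auto
  then show ?thesis by (simp add: mixture_def)
qed

lemma prob_vec_mixture_flat_post: "prob_vec (tabulate n mixture)"
  by (rule prob_vec_mixture[where w = out and f = flat_post])
    (use out_has_sum out_nonneg prob_vec_flat_post has_sum_mixture in auto)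

lemma has_sum_out_tail_post: "((\<lambda>y. out y * tail_post y) has_sum T) {y. 0 < out y}"
proof -
  have "((\<lambda>y. \<Sum>x\<in>{j..n}. out y * post y x) has_sum (\<Sum>x\<in>{j..n}. p x)) {y. 0 < out y}"
    using j_bounds by (intro has_sum_sum has_sum_out_post) auto
  then show ?thesis by (simp add: tail_post_def tail_mass_def sum_distrib_left)
qed

lemma sum_pi_ext_le_mixture:
  assumes "m \<le> n"
  shows "sum pi_ext {1..m} \<le> sum mixture {1..m}"
proof -
  define head where "head y = (\<Sum>l\<in>{1..m}. if l < j then post y l else 0)" for y
  have "((\<lambda>y. out y * (if l < j then post y l else 0)) has_sum (if l < j then p l else 0))
      {y. 0 < out y}" if "l \<in> {1..m}" for l
  proof (cases "l < j")
    case True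
    then show ?thesis using has_sum_out_post[of l] that assms by simp
  qed simp
  then have "((\<lambda>y. \<Sum>l\<in>{1..m}. out y * (if l < j then post y l else 0))
      has_sum (\<Sum>l\<in>{1..m}. if l < j then p l else 0)) {y. 0 < out y}"
    by (rule has_sum_sum[OF finite_atLeastAtMost])
  then have "((\<lambda>y. out y * head y) has_sum (\<Sum>l\<in>{1..m}. if l < j then p l else 0)) {y. 0 < out y}"
    by (simp add: head_def sum_distrib_left)
  from has_sum_add[OF this has_sum_cmult_right[OF has_sum_out_tail_post, of "tail_share m"]]
  have lower: "((\<lambda>y. out y * (head y + tail_share m * tail_post y))
      has_sum ((\<Sum>l\<in>{1..m}. if l < j then p l else 0) + tail_share m * T)) {y. 0 < out y}"
    by (simp add: algebra_simps)
  have "((\<lambda>y. \<Sum>l\<in>{1..m}. out y * flat_post y l) has_sum sum mixture {1..m}) {y. 0 < out y}"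
    using assms by (intro has_sum_sum[OF finite_atLeastAtMost] has_sum_mixture) auto
  then have upper: "((\<lambda>y. out y * sum (flat_post y) {1..m}) has_sum sum mixture {1..m}) {y. 0 < out y}"
    by (simp add: sum_distrib_left)
  have "(\<Sum>l\<in>{1..m}. if l < j then p l else 0) + tail_share m * T \<le> sum mixture {1..m}"
  proof (rule has_sum_mono[OF lower upper])
    fix y assume "y \<in> {y. 0 < out y}"
    then show "out y * (head y + tail_share m * tail_post y) \<le> out y * sum (flat_post y) {1..m}"
      using sum_flat_post_ge[of y m] by (simp add: head_def)
  qed
  then show ?thesis using sum_pi_ext_eq_tail_share[of m] by linarith
qed

lemma F_post_le_F_flat_post:
  assumes F: "symmetric_concave F" and y: "0 < out y"
  shows "F (tabulate n (post y)) \<le> F (tabulate n (flat_post y))"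
proof -
  interpret symmetric_concave F by fact
  have "F (tabulate n (post y)) \<le> F (tabulate n (\<lambda>i. if i \<in> head_support y then post y i
      else if i \<in> free_slots y then sum (post y) (tail_support y) / card (free_slots y) else 0))"
  proof (rule F_le_spread[OF prob_vec_post[OF y]])
    show "head_support y \<subseteq> {1..n}" "tail_support y \<subseteq> {1..n}" "free_slots y \<subseteq> {1..n}"
      using k_less by (auto simp: head_support_def tail_support_def free_slots_def preim_def)
    show "head_support y \<inter> tail_support y = {}" "head_support y \<inter> free_slots y = {}"
      by (auto simp: head_support_def tail_support_def free_slots_def)
    show "card (tail_support y) \<le> card (free_slots y)" by (rule card_tail_support_le)
    show "post y i = 0" if "i \<in> {1..n} - (head_support y \<union> tail_support y)" for i
      using that j_bounds by (intro post_zero) (auto simp: head_support_def tail_support_def)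
  qed
  moreover have "(\<lambda>i. if i \<in> head_support y then post y i
      else if i \<in> free_slots y then sum (post y) (tail_support y) / card (free_slots y) else 0) = flat_post y"
    by (simp add: fun_eq_iff flat_post_def tail_post_eq)
  ultimately show ?thesis by simp
qed

lemma infsum_F_posterior_le:
  assumes F: "symmetric_concave F" and bound: "\<And>x. prob_vec x \<Longrightarrow> \<bar>F x\<bar> \<le> B"
  shows "infsum (\<lambda>y. out y * F (posterior p n W y)) {y. 0 < out y} \<le> F (pi_vec p n k)"
proof -
  interpret symmetric_concave F by fact
  have out: "out summable_on {y. 0 < out y}" using out_has_sum by (auto simp: summable_on_def)
  have "infsum (\<lambda>y. out y * F (posterior p n W y)) {y. 0 < out y}
      \<le> infsum (\<lambda>y. out y * F (tabulate n (flat_post y))) {y. 0 < out y}"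
  proof (rule infsum_mono)
    show "(\<lambda>y. out y * F (posterior p n W y)) summable_on {y. 0 < out y}"
      using bound prob_vec_post by (intro summable_on_weighted_bounded[OF out]) (auto simp: posterior_eq)
    show "(\<lambda>y. out y * F (tabulate n (flat_post y))) summable_on {y. 0 < out y}"
      using bound prob_vec_flat_post by (intro summable_on_weighted_bounded[OF out]) auto
    show "out y * F (posterior p n W y) \<le> out y * F (tabulate n (flat_post y))" if "y \<in> {y. 0 < out y}" for y
      using that F_post_le_F_flat_post[OF F] by (simp add: posterior_eq)
  qed
  also have "\<dots> \<le> F (tabulate n mixture)"
    using out_has_sum out_nonneg prob_vec_flat_post has_sum_mixture bound
    by (intro infsum_F_le_F_mixture) auto
  also have "\<dots> \<le> F (tabulate n pi_ext)"
    using prob_vec_mixture_flat_post prob_vec_pi_ext pi_ext_antimono sum_pi_ext_le_mixture k_less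
    by (intro F_le_if_majorizes) auto
  also have "\<dots> = F (pi_vec p n k)" by (rule F_pi_ext_eq[OF F])
  finally show ?thesis .
qed

end

lemma gen_entropy_cases:
  assumes "gen_entropy \<eta> F"
  obtains B where "\<And>x. prob_vec x \<Longrightarrow> \<bar>F x\<bar> \<le> B" "mono \<eta>" "symmetric_concave F"
  | B where "\<And>x. prob_vec x \<Longrightarrow> \<bar>- F x\<bar> \<le> B" "mono (\<lambda>t. \<eta> (- t))" "symmetric_concave (\<lambda>x. - F x)"
proof -
  have bounded: "\<exists>B. \<forall>x. prob_vec x \<longrightarrow> \<bar>F x\<bar> \<le> B"
    and sym: "\<forall>q q'. prob_vec q \<and> mset q' = mset q \<longrightarrow> F q' = F q"
    and exp: "\<forall>q. prob_vec q \<longrightarrow> F (q @ [0]) = F q"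
    and cases: "(mono \<eta> \<and> concave_F F) \<or> (antimono \<eta> \<and> convex_F F)"
    using assms unfolding gen_entropy_def by blast+
  from bounded obtain B where B: "\<And>x. prob_vec x \<Longrightarrow> \<bar>F x\<bar> \<le> B" by blast
  from cases show thesis
  proof
    assume "mono \<eta> \<and> concave_F F"
    moreover have "symmetric_concave F" if "concave_F F"
      using that by unfold_locales (use sym exp in blast)+
    ultimately show thesis using that(1)[OF B] by blast
  next
    assume "antimono \<eta> \<and> convex_F F"
    then have "mono (\<lambda>t. \<eta> (- t))" and convex: "convex_F F" by (auto simp: mono_def antimono_def)
    moreover have "concave_F (\<lambda>x. - F x)"
      unfolding concave_F_def
    proof (intro allI impI)
      fix q1 q2 :: "real list" and l :: real
      assume "prob_vec q1 \<and> prob_vec q2 \<and> length q1 = length q2 \<and> 0 \<le> l \<and> l \<le> 1"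
      then have "F (map2 (\<lambda>a b. l * a + (1 - l) * b) q1 q2) \<le> l * F q1 + (1 - l) * F q2"
        using convex by (simp add: convex_F_def)
      then show "l * - F q1 + (1 - l) * - F q2 \<le> - F (map2 (\<lambda>a b. l * a + (1 - l) * b) q1 q2)"
        by simp
    qed
    then have "symmetric_concave (\<lambda>x. - F x)"
    proof unfold_locales
      fix q q' :: "real list" assume "prob_vec q" "mset q' = mset q"
      then have "F q' = F q" using sym by blast
      then show "- F q' = - F q" by simp
    next
      fix q :: "real list" assume "prob_vec q"
      then have "F (q @ [0]) = F q" using exp by blast
      then show "- F (q @ [0]) = - F q" by simp
    qed
    ultimately show thesis using B by (intro that(2)[of B]) auto
  qed
qed

lemma cond_entropy_uminus:
  "cond_entropy \<eta> F p n W = cond_entropy (\<lambda>t. \<eta> (- t)) (\<lambda>x. - F x) p n W"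
  by (simp add: cond_entropy_def infsum_uminus)

context sorted_prior
begin

lemma cond_entropy_le_pi:
  fixes W :: "nat \<Rightarrow> 'y \<Rightarrow> real"
  assumes "gen_entropy \<eta> F" "feasible n k W"
  shows "cond_entropy \<eta> F p n W \<le> \<eta> (F (pi_vec p n k))"
proof -
  interpret feasible_channel n k p W
    by (intro feasible_channel.intro sorted_prior_axioms feasible_channel_axioms.intro assms(2))
  have le: "cond_entropy \<zeta> G p n W \<le> \<zeta> (G (pi_vec p n k))"
    if "symmetric_concave G" "mono \<zeta>" "\<And>x. prob_vec x \<Longrightarrow> \<bar>G x\<bar> \<le> B" for \<zeta> G B
  proof -
    have "infsum (\<lambda>y. out y * G (posterior p n W y)) {y. 0 < out y} \<le> G (pi_vec p n k)"
      by (rule infsum_F_posterior_le[OF that(1)]) (rule that(3))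
    then show ?thesis unfolding cond_entropy_def by (rule monoD[OF that(2)])
  qed
  from assms(1) show ?thesis
  proof (cases rule: gen_entropy_cases)
    case 1
    show ?thesis by (rule le[OF 1(3,2,1)])
  next
    case 2
    have "cond_entropy (\<lambda>t. \<eta> (- t)) (\<lambda>x. - F x) p n W \<le> \<eta> (- (- F (pi_vec p n k)))"
      by (rule le[OF 2(3,2,1)])
    then show ?thesis by (simp add: cond_entropy_uminus[of \<eta>])
  qed
qed

lemma cond_entropy_opt_channel:
  assumes "gen_entropy \<eta> F" "lin_sol p n k v"
  shows "cond_entropy \<eta> F p n (opt_channel p n k v) = \<eta> (F (pi_vec p n k))"
  using assms(1)
proof (cases rule: gen_entropy_cases)
  case 1
  then show ?thesis
    using infsum_F_posterior_opt_channel[OF _ assms(2)] by (simp add: cond_entropy_def)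
next
  case 2
  then show ?thesis
    using infsum_F_posterior_opt_channel[OF 2(3) assms(2)]
    unfolding cond_entropy_uminus[of \<eta>] cond_entropy_def by (simp add: infsum_uminus)
qed

end

theorem theorem1:
  fixes n k :: nat and p :: "nat \<Rightarrow> real"
  assumes "0 < k" and "k < n"
    and "\<forall>i\<in>{1..<n}. p (i + 1) \<le> p i"
    and "p n > 0"
    and "(\<Sum>i=1..n. p i) = 1"
  shows "(\<forall>\<eta> F. gen_entropy \<eta> F \<longrightarrow>
            (\<forall>W :: nat \<Rightarrow> 'y \<Rightarrow> real. feasible n k W \<longrightarrow>
                cond_entropy \<eta> F p n W \<le> \<eta> (F (pi_vec p n k))) \<and>
            (\<exists>W :: nat \<Rightarrow> nat set \<Rightarrow> real. feasible n k W \<and>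
                cond_entropy \<eta> F p n W = \<eta> (F (pi_vec p n k))))
       \<and> (\<exists>v. lin_sol p n k v)
       \<and> (\<forall>v. lin_sol p n k v \<longrightarrow>
            feasible n k (opt_channel p n k v) \<and>
            (\<forall>\<eta> F. gen_entropy \<eta> F \<longrightarrow>
               cond_entropy \<eta> F p n (opt_channel p n k v) = \<eta> (F (pi_vec p n k))))"
proof -
  interpret sorted_prior n k p using assms by unfold_locales
  obtain v0 where v0: "lin_sol p n k v0" using lin_sol_exists by blast
  show ?thesis
  proof (intro conjI allI impI)
    fix \<eta> F and W :: "nat \<Rightarrow> 'y \<Rightarrow> real"
    assume "gen_entropy \<eta> F" "feasible n k W"
    then show "cond_entropy \<eta> F p n W \<le> \<eta> (F (pi_vec p n k))" by (rule cond_entropy_le_pi)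
  next
    fix \<eta> F assume "gen_entropy \<eta> F"
    then show "\<exists>W :: nat \<Rightarrow> nat set \<Rightarrow> real.
        feasible n k W \<and> cond_entropy \<eta> F p n W = \<eta> (F (pi_vec p n k))"
      using feasible_opt_channel[OF v0] cond_entropy_opt_channel[OF _ v0] by blast
  next
    show "\<exists>v. lin_sol p n k v" using v0 by blast
  next
    fix v assume "lin_sol p n k v"
    then show "feasible n k (opt_channel p n k v)" by (rule feasible_opt_channel)
  next
    fix v \<eta> F assume "lin_sol p n k v" "gen_entropy \<eta> F"
    then show "cond_entropy \<eta> F p n (opt_channel p n k v) = \<eta> (F (pi_vec p n k))"
      by (intro cond_entropy_opt_channel)
  qed
qed

end
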